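(* For every $f\in L^{\infty}(\mathbb{R}_+)$, $\omega\in\Omega^*$ and integer $n\ge1$, and every $x\in\mathbb{R}$, $(S^nf)_\omega(x)=(f_\omega*h^n)(x)=\int_0^{\infty}f_\omega(x-t)e^{-t}\frac{t^{n-1}}{(n-1)!}\,dt$.
   Context: $L^{\infty}(\mathbb{R}_+)$: real-valued essentially bounded measurable functions on $[0,\infty)$; $(Sf)(x)=e^{-x}\int_0^xf(t)e^t\,dt$. $h(x)=e^{-x}$ for $x\ge0$, $h(x)=0$ for $x<0$; $h^n=h*\cdots*h$ ($n$ factors), $(g*\phi)(x)=\int_{\mathbb{R}}g(x-t)\phi(t)\,dt$. Let $\beta\mathbb{N}_0$ be the Stone–Čech compactification of $\mathbb{N}_0$ (points = ultrafilters), $\tau$ the extension of $n\mapsto n+1$, $\Omega=(\beta\mathbb{N}_0\times[0,1])/\sim$ with $(\tau\eta,0)\sim(\eta,1)$, containing $\mathbb{R}_+$ via $(n,t)\mapsto n+t$, $\Omega^*=\Omega\setminus\mathbb{R}_+$ with flow $\tau^s(\eta,t)=(\tau^{[t+s]}\eta,t+s-[t+s])$. Each $\omega=(\eta,t)$ is identified with the ultrafilter $\{A+t:A\in\eta\}$ on $\mathbb{R}_+$. For $g\in L^{\infty}(\mathbb{R}_+)$, $g_\omega=\omega\text{-}\lim_sg(\cdot+s)$ (weak* limit in $L^{\infty}(\mathbb{R}_+)=L^1(\mathbb{R}_+)^*$ along $\omega$), extended to $\mathbb{R}$ by $g_\omega(x)=g_{\tau^{-N}\omega}(N+x)$ for $x\in[-N,0]$,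 $N>0$. *)

theory Defs
  imports "HOL-Analysis.Analysis"
begin

text \<open>Elements of L-infinity on [0,inf): real functions (only values on [0,inf) matter)
  that are Lebesgue measurable on [0,inf) and essentially bounded there.\<close>
definition Linf_pos :: "(real \<Rightarrow> real) \<Rightarrow> bool" where
  "Linf_pos g \<longleftrightarrow> set_borel_measurable lebesgue {0..} g \<and>
     (\<exists>C. AE x in lebesgue. x \<in> {0..} \<longrightarrow> \<bar>g x\<bar> \<le> C)"

definition S_op :: "(real \<Rightarrow> real) \<Rightarrow> real \<Rightarrow> real" where
  "S_op f x = exp (- x) * (LINT t:{0..x}|lebesgue. f t * exp t)"

text \<open>Ultrafilters on the naturals (points of the Stone-Cech compactification).\<close>
definition ultrafilter_on :: "'a filter \<Rightarrow> bool" where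
  "ultrafilter_on F \<longleftrightarrow> F \<noteq> bot \<and> (\<forall>P. eventually P F \<or> eventually (\<lambda>x. \<not> P x) F)"

text \<open>The ultrafilter on [0,inf) associated with omega = (eta,t): {A + t : A in eta}.\<close>
definition omega_filter :: "nat filter \<Rightarrow> real \<Rightarrow> real filter" where
  "omega_filter \<eta> t = filtermap (\<lambda>n. real n + t) \<eta>"

definition tau_inv :: "nat \<Rightarrow> nat filter \<Rightarrow> nat filter" where
  "tau_inv N \<eta> = filtermap (\<lambda>n. n - N) \<eta>"

text \<open>Weak-star limit in L-infinity(R+) = L1(R+)* of the translates g(. + s) along F.\<close>
definition is_wstar_lim :: "real filter \<Rightarrow> (real \<Rightarrow> real) \<Rightarrow> (real \<Rightarrow> real) \<Rightarrow> bool" where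
  "is_wstar_lim F g G \<longleftrightarrow> Linf_pos G \<and>
     (\<forall>\<phi>. set_integrable lebesgue {0..} \<phi> \<longrightarrow>
        ((\<lambda>s. LINT x:{0..}|lebesgue. g (x + s) * \<phi> x)
           \<longlongrightarrow> (LINT x:{0..}|lebesgue. G x * \<phi> x)) F)"

definition wstar_lim :: "real filter \<Rightarrow> (real \<Rightarrow> real) \<Rightarrow> real \<Rightarrow> real" where
  "wstar_lim F g = (SOME G. is_wstar_lim F g G)"

definition g_omega :: "nat filter \<Rightarrow> real \<Rightarrow> (real \<Rightarrow> real) \<Rightarrow> real \<Rightarrow> real" where
  "g_omega \<eta> t g x =
     (if 0 \<le> x then wstar_lim (omega_filter \<eta> t) g x
      else (let N = nat \<lceil>- x\<rceil> in wstar_lim (omega_filter (tau_inv N \<eta>) t) g (real N + x)))"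

definition h_fun :: "real \<Rightarrow> real" where
  "h_fun x = (if 0 \<le> x then exp (- x) else 0)"

definition conv :: "(real \<Rightarrow> real) \<Rightarrow> (real \<Rightarrow> real) \<Rightarrow> real \<Rightarrow> real" where
  "conv g \<phi> x = (LINT t|lebesgue. g (x - t) * \<phi> t)"

fun h_pow :: "nat \<Rightarrow> real \<Rightarrow> real" where
  "h_pow 0 = h_fun"
| "h_pow (Suc 0) = h_fun"
| "h_pow (Suc (Suc n)) = conv h_fun (h_pow (Suc n))"

end

theory Submission
  imports Defs "HOL-Probability.Distributions"
begin

text \<open>By Erlang's convolution identity, \<open>S\<^sup>n f = f * h\<^sup>n\<close>, so the point is that weak-star
  limits of translates commute with convolution by an integrable kernel \<open>k\<close>. Testing \<open>f * k\<close>
  against \<open>\<phi>\<close> is testing \<open>f\<close> against the correlation of \<open>k\<close> and \<open>\<phi>\<close>, which is again integrable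
  but need not vanish on the negative axis; it is an \<open>L\<^sup>1\<close>-limit of test functions supported in
  some \<open>[-D,\<infinity>)\<close>, and against those the limit along \<open>\<tau>\<^sup>-\<^sup>D \<omega>\<close> can be used. These limits
  exist because \<open>L\<^sup>\<infinity>\<close> is the dual of \<open>L\<^sup>1\<close> (obtained here from Radon-Nikodym), and they are
  translates of one another, so they glue to a single bounded Borel function on the line
  representing \<open>g\<^sub>\<omega>\<close>.\<close>

section \<open>Limits along ultrafilters\<close>

lemma tendsto_by_approximation:
  fixes a :: "'b \<Rightarrow> real"
  assumes "\<And>e. e > 0 \<Longrightarrow> \<exists>b Lb. (b \<longlongrightarrow> Lb) F \<and> (\<forall>\<^sub>F s in F. \<bar>a s - b s\<bar> \<le> e) \<and> \<bar>L - Lb\<bar> \<le> e"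
  shows "(a \<longlongrightarrow> L) F"
proof (rule tendstoI)
  fix e :: real assume "e > 0"
  then obtain b Lb where b: "(b \<longlongrightarrow> Lb) F" "\<forall>\<^sub>F s in F. \<bar>a s - b s\<bar> \<le> e/4" "\<bar>L - Lb\<bar> \<le> e/4"
    using assms[of "e/4"] by auto
  have "\<forall>\<^sub>F s in F. dist (b s) Lb < e/4" using tendstoD[OF b(1), of "e/4"] \<open>e > 0\<close> by simp
  with b(2) show "\<forall>\<^sub>F s in F. dist (a s) L < e"
    by eventually_elim (use b(3) in \<open>simp add: dist_real_def, smt (verit)\<close>)
qed

lemma ultrafilter_on_neq_bot: "ultrafilter_on F \<Longrightarrow> F \<noteq> bot"
  by (simp add: ultrafilter_on_def)

lemma ultrafilter_on_filtermap: "ultrafilter_on F \<Longrightarrow> ultrafilter_on (filtermap g F)"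
  by (simp add: ultrafilter_on_def eventually_filtermap filtermap_bot_iff)

lemma ultrafilter_on_convergent_bounded:
  fixes b :: "'b \<Rightarrow> real"
  assumes U: "ultrafilter_on F" and ev: "\<forall>\<^sub>F s in F. b s \<in> {lo..hi}"
  shows "\<exists>L. (b \<longlongrightarrow> L) F"
proof -
  have "filtermap b F \<noteq> bot" using U by (simp add: ultrafilter_on_def filtermap_bot_iff)
  moreover have "eventually (\<lambda>x. x \<in> {lo..hi}) (filtermap b F)" using ev by (simp add: eventually_filtermap)
  ultimately obtain x where x: "inf (nhds x) (filtermap b F) \<noteq> bot"
    using compact_filter[THEN iffD1, OF compact_Icc] by blast
  have "(b \<longlongrightarrow> x) F"
  proof (rule topological_tendstoI)
    fix S assume S: "open S" "x \<in> S"
    show "\<forall>\<^sub>F s in F. b s \<in> S"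
    proof (rule ccontr)
      assume "\<not> (\<forall>\<^sub>F s in F. b s \<in> S)"
      then have "\<forall>\<^sub>F s in F. b s \<notin> S" using U unfolding ultrafilter_on_def by blast
      then have "eventually (\<lambda>y. y \<notin> S) (filtermap b F)" by (simp add: eventually_filtermap)
      moreover have "eventually (\<lambda>y. y \<in> S) (nhds x)" using S by (rule eventually_nhds_in_open)
      ultimately have "eventually (\<lambda>_. False) (inf (nhds x) (filtermap b F))"
        unfolding eventually_inf by blast
      with x show False by (simp add: eventually_False)
    qed
  qed
  then show ?thesis by blast
qed

lemma tendsto_suminf_dominated:
  fixes b :: "nat \<Rightarrow> 'a \<Rightarrow> real"
  assumes F: "F \<noteq> bot" and lim: "\<And>i. (b i \<longlongrightarrow> L i) F"
    and bd: "\<And>i s. \<bar>b i s\<bar> \<le> m i" and sm: "summable m"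
  shows "((\<lambda>s. \<Sum>i. b i s) \<longlongrightarrow> (\<Sum>i. L i)) F"
proof (rule tendsto_by_approximation)
  have Lb: "\<bar>L i\<bar> \<le> m i" for i
    using F bd by (intro tendsto_upperbound[OF tendsto_rabs[OF lim[of i]]]) (auto intro: always_eventually)
  fix e :: real assume "e > 0"
  then obtain n where n: "norm (\<Sum>i. m (i + n)) < e"
    using suminf_exist_split[OF \<open>e > 0\<close> sm] by blast
  have split: "\<bar>(\<Sum>i. c i) - (\<Sum>i<n. c i)\<bar> \<le> e" if c: "\<And>i. \<bar>c i\<bar> \<le> m i" for c :: "nat \<Rightarrow> real"
  proof -
    have sm_tail: "summable (\<lambda>i. m (i + n))" using sm by (rule summable_ignore_initial_segment)
    have s1: "summable (\<lambda>i. \<bar>c (i + n)\<bar>)" by (rule summable_comparison_test'[OF sm_tail]) (use c in auto)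
    have "(\<Sum>i. c i) = (\<Sum>i. c (i + n)) + (\<Sum>i<n. c i)"
      by (rule suminf_split_initial_segment, rule summable_rabs_cancel,
          rule summable_comparison_test'[OF sm]) (use c in auto)
    then have "\<bar>(\<Sum>i. c i) - (\<Sum>i<n. c i)\<bar> \<le> (\<Sum>i. \<bar>c (i + n)\<bar>)" using s1 by (simp add: summable_rabs)
    also have "\<dots> \<le> (\<Sum>i. m (i + n))" by (rule suminf_le) (use c s1 sm_tail in auto)
    finally show ?thesis using n by simp
  qed
  show "\<exists>b' Lb. (b' \<longlongrightarrow> Lb) F \<and> (\<forall>\<^sub>F s in F. \<bar>(\<Sum>i. b i s) - b' s\<bar> \<le> e) \<and> \<bar>(\<Sum>i. L i) - Lb\<bar> \<le> e"
    using split[of L] split[of "\<lambda>i. b i _"] Lb bd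
    by (intro exI[of _ "\<lambda>s. \<Sum>i<n. b i s"] exI[of _ "\<Sum>i<n. L i"] conjI tendsto_sum lim always_eventually) auto
qed

section \<open>The ultrafilters of the points \<open>\<tau>\<^sup>-\<^sup>N \<omega>\<close>\<close>

lemma tau_inv_0 [simp]: "tau_inv 0 \<eta> = \<eta>"
  by (simp add: tau_inv_def filtermap_ident)

lemma omega_filter_tau_inv: "omega_filter (tau_inv N \<eta>) t = filtermap (\<lambda>n. real (n - N) + t) \<eta>"
  by (simp add: omega_filter_def tau_inv_def filtermap_filtermap o_def)

lemma ultrafilter_on_omega_filter: "ultrafilter_on \<eta> \<Longrightarrow> ultrafilter_on (omega_filter \<eta> t)"
  unfolding omega_filter_def by (rule ultrafilter_on_filtermap)

lemma ultrafilter_on_tau_inv: "ultrafilter_on \<eta> \<Longrightarrow> ultrafilter_on (tau_inv N \<eta>)"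
  unfolding tau_inv_def by (rule ultrafilter_on_filtermap)

lemma omega_filter_tau_inv_neq_bot: "ultrafilter_on \<eta> \<Longrightarrow> omega_filter (tau_inv N \<eta>) t \<noteq> bot"
  by (intro ultrafilter_on_neq_bot ultrafilter_on_omega_filter ultrafilter_on_tau_inv)

lemma eventually_ge_cofinite_filter:
  assumes "\<eta> \<le> cofinite" shows "\<forall>\<^sub>F n in \<eta>. (M::nat) \<le> n"
  using assms eventually_ge_at_top[of M] by (metis cofinite_eq_sequentially filter_leD)

lemma eventually_omega_filter_ge:
  assumes "\<eta> \<le> cofinite" "t \<ge> 0"
  shows "\<forall>\<^sub>F s in omega_filter (tau_inv N \<eta>) t. a \<le> s"
proof -
  obtain M :: nat where "a \<le> real M" using real_arch_simple by blast
  have "\<forall>\<^sub>F n in \<eta>. M + N \<le> n" by (rule eventually_ge_cofinite_filter[OF assms(1)])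
  then have "\<forall>\<^sub>F n in \<eta>. a \<le> real (n - N) + t"
    by eventually_elim (use \<open>a \<le> real M\<close> assms(2) in auto)
  then show ?thesis by (simp add: omega_filter_tau_inv eventually_filtermap)
qed

text \<open>Truncated subtraction in \<^const>\<open>tau_inv\<close> does no harm as long as \<open>\<eta>\<close> is free.\<close>
lemma omega_filter_tau_inv_add:
  assumes "\<eta> \<le> cofinite"
  shows "omega_filter (tau_inv N \<eta>) t = filtermap (\<lambda>s. s + real D) (omega_filter (tau_inv (N + D) \<eta>) t)"
proof -
  have "eventually P (filtermap (\<lambda>n. real (n - N) + t) \<eta>) =
      eventually P (filtermap (\<lambda>s. s + real D) (filtermap (\<lambda>n. real (n - (N + D)) + t) \<eta>))" for P
    unfolding eventually_filtermap
    by (rule eventually_subst, use eventually_ge_cofinite_filter[OF assms, of "N + D"] in eventually_elim)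
      (auto simp: algebra_simps of_nat_diff)
  then show ?thesis unfolding omega_filter_tau_inv by (simp add: filter_eq_iff)
qed

section \<open>Lebesgue measure versus Borel measure\<close>

lemma AE_lebesgue_affine:
  fixes c t :: real
  assumes c: "c \<noteq> 0" and ae: "AE x in lebesgue. P x"
  shows "AE x in lebesgue. P (t + c * x)"
proof -
  from ae obtain N where N: "{x \<in> space lebesgue. \<not> P x} \<subseteq> N" "emeasure lebesgue N = 0"
    "N \<in> sets lebesgue" by (rule AE_E)
  have T: "(\<lambda>x. t + c * x) \<in> lebesgue \<rightarrow>\<^sub>M lebesgue"
    using lebesgue_affine_measurable[where c = "\<lambda>x::real. c" and t = t] c by simp
  have "N \<in> null_sets (density (distr lebesgue lebesgue (\<lambda>x. t + c * x)) (\<lambda>_. ennreal \<bar>c\<bar>))"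
    using N(2,3) lebesgue_real_affine[OF c, of t] by (metis null_setsI)
  then have "AE x in distr lebesgue lebesgue (\<lambda>x. t + c * x). x \<notin> N"
    using c by (subst (asm) null_sets_density_iff) auto
  moreover have "{x \<in> space lebesgue. x \<notin> N} \<in> sets lebesgue"
    using sets.compl_sets[OF N(3)] by (simp add: set_diff_eq)
  ultimately have "AE x in lebesgue. t + c * x \<notin> N" by (subst (asm) AE_distr_iff[OF T]) auto
  then show ?thesis by eventually_elim (use N(1) in auto)
qed

lemma AE_lebesgue_shift:
  fixes d :: real
  shows "AE x in lebesgue. P x \<Longrightarrow> AE x in lebesgue. P (x + d)"
  using AE_lebesgue_affine[of 1 P d] by (simp add: add.commute)

lemma AE_lebesgue_reflect:
  fixes d :: real
  shows "AE x in lebesgue. P x \<Longrightarrow> AE x in lebesgue. P (d - x)"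
  using AE_lebesgue_affine[of "-1" P d] by simp

lemma borel_measurable_lebesgueI: "f \<in> borel_measurable borel \<Longrightarrow> f \<in> borel_measurable (lebesgue :: real measure)"
  by (simp add: measurable_completion)

lemma integral_lebesgue_eq_lborel:
  fixes f :: "real \<Rightarrow> real"
  shows "f \<in> borel_measurable borel \<Longrightarrow> integral\<^sup>L lebesgue f = integral\<^sup>L lborel f"
  by (rule integral_completion) simp

lemma integrable_lebesgue_iff_lborel:
  fixes f :: "real \<Rightarrow> real"
  shows "f \<in> borel_measurable borel \<Longrightarrow> integrable lebesgue f \<longleftrightarrow> integrable lborel f"
  by (rule integrable_completion) simp

lemma integrable_bounded_mult:
  fixes B \<psi> :: "'a \<Rightarrow> real"
  assumes "integrable M \<psi>" "B \<in> borel_measurable M" "\<And>x. x \<in> space M \<Longrightarrow> \<bar>B x\<bar> \<le> K"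
  shows "integrable M (\<lambda>x. B x * \<psi> x)"
proof (rule Bochner_Integration.integrable_bound[of _ "\<lambda>x. K * \<psi> x"])
  show "integrable M (\<lambda>x. K * \<psi> x)" using assms(1) by simp
  show "(\<lambda>x. B x * \<psi> x) \<in> borel_measurable M" using assms(1,2) by auto
  show "AE x in M. norm (B x * \<psi> x) \<le> norm (K * \<psi> x)"
    by (rule AE_I2) (use assms(3) in \<open>auto simp: abs_mult intro!: mult_right_mono intro: order_trans[OF _ abs_ge_self]\<close>)
qed

lemma integral_bounded_mult_diff_le:
  fixes B \<psi>1 \<psi>2 :: "'a \<Rightarrow> real"
  assumes "integrable M \<psi>1" "integrable M \<psi>2" "B \<in> borel_measurable M" "\<And>x. x \<in> space M \<Longrightarrow> \<bar>B x\<bar> \<le> K"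
  shows "\<bar>(\<integral>x. B x * \<psi>1 x \<partial>M) - (\<integral>x. B x * \<psi>2 x \<partial>M)\<bar> \<le> K * (\<integral>x. \<bar>\<psi>1 x - \<psi>2 x\<bar> \<partial>M)"
proof -
  have "integrable M (\<lambda>x. B x * \<psi>1 x)" "integrable M (\<lambda>x. B x * \<psi>2 x)"
    by (rule integrable_bounded_mult; use assms in auto)+
  then have "(\<integral>x. B x * \<psi>1 x \<partial>M) - (\<integral>x. B x * \<psi>2 x \<partial>M) = (\<integral>x. B x * (\<psi>1 x - \<psi>2 x) \<partial>M)"
    by (simp add: algebra_simps)
  also have "\<bar>\<dots>\<bar> \<le> (\<integral>x. \<bar>B x * (\<psi>1 x - \<psi>2 x)\<bar> \<partial>M)"
    using Bochner_Integration.integral_norm_bound[of M "\<lambda>x. B x * (\<psi>1 x - \<psi>2 x)"] by simp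
  also have "\<dots> \<le> (\<integral>x. K * \<bar>\<psi>1 x - \<psi>2 x\<bar> \<partial>M)"
  proof (rule integral_mono)
    show "integrable M (\<lambda>x. \<bar>B x * (\<psi>1 x - \<psi>2 x)\<bar>)"
      by (intro integrable_abs integrable_bounded_mult) (use assms in auto)
    show "\<bar>B x * (\<psi>1 x - \<psi>2 x)\<bar> \<le> K * \<bar>\<psi>1 x - \<psi>2 x\<bar>" if "x \<in> space M" for x
      using assms(4)[OF that] by (auto simp: abs_mult intro!: mult_right_mono)
  qed (use assms in auto)
  finally show ?thesis by simp
qed

section \<open>Weak-star limits of translates\<close>

lemma Linf_posI:
  assumes "G \<in> borel_measurable borel" "AE x in lebesgue. x \<ge> 0 \<longrightarrow> \<bar>G x\<bar> \<le> C"
  shows "Linf_pos G"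
  unfolding Linf_pos_def set_borel_measurable_def using assms by (auto intro!: borel_measurable_lebesgueI)

lemma set_integrable_Linf_pos_mult:
  fixes G \<phi> :: "real \<Rightarrow> real"
  assumes G: "Linf_pos G" and \<phi>: "set_integrable lebesgue {0..} \<phi>"
  shows "set_integrable lebesgue {0..} (\<lambda>x. G x * \<phi> x)"
proof -
  from G obtain C where mG: "(\<lambda>x. indicator {0..} x * G x) \<in> borel_measurable lebesgue"
    and bG: "AE x in lebesgue. x \<in> {0..} \<longrightarrow> \<bar>G x\<bar> \<le> C"
    unfolding Linf_pos_def set_borel_measurable_def by auto
  have i\<phi>: "integrable lebesgue (\<lambda>x. indicator {0..} x * \<phi> x)"
    using \<phi> by (simp add: set_integrable_def)
  have "integrable lebesgue (\<lambda>x. (indicator {0..} x * G x) * (indicator {0..} x * \<phi> x))"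
    by (rule Bochner_Integration.integrable_bound[OF integrable_mult_right[OF i\<phi>, of C]])
      (use mG i\<phi> bG in \<open>auto simp: abs_mult indicator_def intro!: mult_right_mono elim!: AE_mp\<close>)
  moreover have "(\<lambda>x. (indicator {0..} x * G x) * (indicator {0..} x * \<phi> x)) =
      (\<lambda>x. indicator {0..} x *\<^sub>R (G x * \<phi> x))"
    by (auto simp: fun_eq_iff indicator_def)
  ultimately show ?thesis by (simp add: set_integrable_def)
qed

lemma AE_zero_on_Icc_if_set_integrals_vanish:
  fixes H :: "real \<Rightarrow> real"
  assumes H: "Linf_pos H"
    and orth: "\<And>\<phi>. set_integrable lebesgue {0..} \<phi> \<Longrightarrow> (LINT x:{0..}|lebesgue. H x * \<phi> x) = 0"
  shows "AE x in lebesgue. x \<in> {0..a} \<longrightarrow> H x = 0"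
proof -
  define D where "D x = indicator {0..} x * H x" for x
  have "D \<in> borel_measurable lebesgue"
    using H unfolding Linf_pos_def set_borel_measurable_def D_def by simp
  then have sgnD: "(\<lambda>x. sgn (D x)) \<in> borel_measurable lebesgue"
    using measurable_compose[OF _ borel_measurable_sgn] by (simp add: o_def)
  define \<phi> where "\<phi> x = indicator {0..a} x * sgn (D x)" for x
  have m\<phi>: "\<phi> \<in> borel_measurable lebesgue"
    unfolding \<phi>_def by (intro borel_measurable_times[OF _ sgnD] borel_measurable_lebesgueI) simp
  have Ia: "integrable lebesgue (indicator {0..a} :: real \<Rightarrow> real)"
    by (rule integrable_real_indicator) (simp_all add: emeasure_completion emeasure_lborel_Icc_eq)
  have s\<phi>: "set_integrable lebesgue {0..} \<phi>"
    unfolding set_integrable_def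
  proof (rule Bochner_Integration.integrable_bound[OF Ia])
    show "(\<lambda>x. indicator {0..} x *\<^sub>R \<phi> x) \<in> borel_measurable lebesgue"
      by (rule borel_measurable_scaleR[OF borel_measurable_lebesgueI m\<phi>]) simp
    show "AE x in lebesgue. norm (indicator {0..} x *\<^sub>R \<phi> x) \<le> norm (indicator {0..a} x :: real)"
      by (rule AE_I2) (simp add: \<phi>_def indicator_def sgn_if)
  qed
  have eq: "indicator {0..} x * (H x * \<phi> x) = indicator {0..a} x * \<bar>D x\<bar>" for x
    by (simp add: \<phi>_def D_def indicator_def sgn_if)
  have "integrable lebesgue (\<lambda>x. indicator {0..a} x * \<bar>D x\<bar>)"
    using set_integrable_Linf_pos_mult[OF H s\<phi>] by (simp add: set_integrable_def eq)
  moreover have "(\<integral>x. indicator {0..a} x * \<bar>D x\<bar> \<partial>lebesgue) = 0"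
    using orth[OF s\<phi>] by (simp add: set_lebesgue_integral_def eq)
  ultimately have "AE x in lebesgue. indicator {0..a} x * \<bar>D x\<bar> = 0"
    by (subst (asm) integral_nonneg_eq_0_iff_AE) auto
  then show ?thesis by eventually_elim (auto simp: D_def indicator_def)
qed

lemma AE_zero_if_set_integrals_vanish:
  fixes H :: "real \<Rightarrow> real"
  assumes "Linf_pos H"
    and "\<And>\<phi>. set_integrable lebesgue {0..} \<phi> \<Longrightarrow> (LINT x:{0..}|lebesgue. H x * \<phi> x) = 0"
  shows "AE x in lebesgue. x \<ge> 0 \<longrightarrow> H x = 0"
proof -
  have "AE x in lebesgue. \<forall>k::nat. x \<in> {0..real k} \<longrightarrow> H x = 0"
    using AE_zero_on_Icc_if_set_integrals_vanish[OF assms] by (subst AE_all_countable) auto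
  then show ?thesis
    by eventually_elim (metis atLeastAtMost_iff real_arch_simple)
qed

lemma is_wstar_lim_unique:
  assumes F: "F \<noteq> bot" and W1: "is_wstar_lim F g G1" and W2: "is_wstar_lim F g G2"
  shows "AE x in lebesgue. x \<ge> 0 \<longrightarrow> G1 x = G2 x"
proof -
  have G1: "Linf_pos G1" and G2: "Linf_pos G2" using W1 W2 by (simp_all add: is_wstar_lim_def)
  have "Linf_pos (\<lambda>x. G1 x - G2 x)"
  proof -
    from G1 G2 obtain C1 C2 where
      "(\<lambda>x. indicator {0..} x * G1 x) \<in> borel_measurable lebesgue" "AE x in lebesgue. x \<in> {0..} \<longrightarrow> \<bar>G1 x\<bar> \<le> C1"
      "(\<lambda>x. indicator {0..} x * G2 x) \<in> borel_measurable lebesgue" "AE x in lebesgue. x \<in> {0..} \<longrightarrow> \<bar>G2 x\<bar> \<le> C2"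
      unfolding Linf_pos_def set_borel_measurable_def by auto
    then show ?thesis
      unfolding Linf_pos_def set_borel_measurable_def
      by (intro conjI exI[of _ "C1 + C2"]) (auto simp: right_diff_distrib elim!: eventually_elim2)
  qed
  then have "AE x in lebesgue. x \<ge> 0 \<longrightarrow> G1 x - G2 x = 0"
  proof (rule AE_zero_if_set_integrals_vanish)
    fix \<phi> :: "real \<Rightarrow> real" assume \<phi>: "set_integrable lebesgue {0..} \<phi>"
    have "(LINT x:{0..}|lebesgue. G1 x * \<phi> x) = (LINT x:{0..}|lebesgue. G2 x * \<phi> x)"
      using W1 W2 \<phi> unfolding is_wstar_lim_def by (blast intro: tendsto_unique[OF F])
    then show "(LINT x:{0..}|lebesgue. (G1 x - G2 x) * \<phi> x) = 0"
      using set_integrable_Linf_pos_mult[OF G1 \<phi>] set_integrable_Linf_pos_mult[OF G2 \<phi>]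
      by (simp add: left_diff_distrib set_integral_diff)
  qed
  then show ?thesis by simp
qed

lemma set_integral_lebesgue_cong_AE:
  fixes f g :: "real \<Rightarrow> real"
  assumes g: "set_borel_measurable lebesgue A g" and ae: "AE x in lebesgue. x \<in> A \<longrightarrow> f x = g x"
  shows "(LINT x:A|lebesgue. f x) = (LINT x:A|lebesgue. g x)"
proof -
  have ae': "AE x in lebesgue. indicator A x *\<^sub>R g x = indicator A x *\<^sub>R f x"
    using ae by eventually_elim (auto simp: indicator_def)
  have mg: "(\<lambda>x. indicator A x *\<^sub>R g x) \<in> borel_measurable lebesgue"
    using g by (simp add: set_borel_measurable_def)
  have mf: "(\<lambda>x. indicator A x *\<^sub>R f x) \<in> borel_measurable lebesgue"
    by (rule borel_measurable_AE[OF mg ae'])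
  show ?thesis
    unfolding set_lebesgue_integral_def by (rule integral_cong_AE[OF mf mg]) (use ae' in auto)
qed

lemma set_integral_nonneg_eq_lborel:
  fixes \<phi> \<phi>0 H :: "real \<Rightarrow> real"
  assumes "AE x in lebesgue. indicator {0..} x * \<phi> x = \<phi>0 x"
    and "(\<lambda>x. indicator {0..} x * \<phi> x) \<in> borel_measurable lebesgue"
    and [measurable]: "H \<in> borel_measurable borel" "\<phi>0 \<in> borel_measurable borel"
  shows "(LINT x:{0..}|lebesgue. H x * \<phi> x) = (\<integral>x. H x * \<phi>0 x \<partial>lborel)"
proof -
  have "(LINT x:{0..}|lebesgue. H x * \<phi> x) = (\<integral>x. H x * (indicator {0..} x * \<phi> x) \<partial>lebesgue)"
    unfolding set_lebesgue_integral_def by (rule Bochner_Integration.integral_cong) (auto simp: indicator_def)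
  also have "\<dots> = (\<integral>x. H x * \<phi>0 x \<partial>lebesgue)"
  proof (rule integral_cong_AE)
    show "(\<lambda>x. H x * (indicator {0..} x * \<phi> x)) \<in> borel_measurable lebesgue"
      using borel_measurable_lebesgueI[OF assms(3)] assms(2) by (rule borel_measurable_times)
    show "(\<lambda>x. H x * \<phi>0 x) \<in> borel_measurable lebesgue" by (rule borel_measurable_lebesgueI) simp
    show "AE x in lebesgue. H x * (indicator {0..} x * \<phi> x) = H x * \<phi>0 x"
      using assms(1) by eventually_elim simp
  qed
  also have "\<dots> = (\<integral>x. H x * \<phi>0 x \<partial>lborel)"
    by (rule integral_lebesgue_eq_lborel) simp
  finally show ?thesis .
qed

lemma set_integrable_nonneg_borel_representative:
  fixes \<phi> :: "real \<Rightarrow> real"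
  assumes "set_integrable lebesgue {0..} \<phi>"
  obtains \<phi>0 where "\<phi>0 \<in> borel_measurable borel" "integrable lborel \<phi>0" "\<And>x. x < 0 \<Longrightarrow> \<phi>0 x = 0"
    "AE x in lebesgue. indicator {0..} x * \<phi> x = \<phi>0 x"
proof -
  have I: "integrable lebesgue (\<lambda>x. indicator {0..} x * \<phi> x)"
    using assms by (simp add: set_integrable_def)
  then have "(\<lambda>x. indicator {0..} x * \<phi> x) \<in> borel_measurable (completion lborel)" by auto
  from completion_ex_borel_measurable_real[OF this]
  obtain \<phi>1 where \<phi>1: "\<phi>1 \<in> borel_measurable lborel" "AE x in lborel. indicator {0..} x * \<phi> x = \<phi>1 x"
    by blast
  define \<phi>0 where "\<phi>0 x = indicator {0..} x * \<phi>1 x" for x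
  have m: "\<phi>0 \<in> borel_measurable borel" using \<phi>1(1) unfolding \<phi>0_def by simp
  have "AE x in lborel. indicator {0..} x * \<phi> x = \<phi>0 x"
    using \<phi>1(2) by eventually_elim (auto simp: \<phi>0_def indicator_def)
  then have ae: "AE x in lebesgue. indicator {0..} x * \<phi> x = \<phi>0 x" by (rule AE_completion)
  have "integrable lebesgue \<phi>0"
    by (rule integrable_cong_AE_imp[OF I]) (use ae m in \<open>auto simp: borel_measurable_lebesgueI\<close>)
  then have "integrable lborel \<phi>0" using integrable_lebesgue_iff_lborel[OF m] by simp
  then show ?thesis by (rule that[OF m _ _ ae]) (simp add: \<phi>0_def)
qed

lemma is_wstar_lim_borel_iff:
  fixes g G :: "real \<Rightarrow> real"
  assumes [measurable]: "g \<in> borel_measurable borel" "G \<in> borel_measurable borel"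
  shows "is_wstar_lim F g G \<longleftrightarrow> Linf_pos G \<and>
    (\<forall>\<phi>. \<phi> \<in> borel_measurable borel \<longrightarrow> integrable lborel \<phi> \<longrightarrow> (\<forall>x<0. \<phi> x = 0) \<longrightarrow>
      ((\<lambda>s. \<integral>x. g (x + s) * \<phi> x \<partial>lborel) \<longlongrightarrow> (\<integral>x. G x * \<phi> x \<partial>lborel)) F)"
  unfolding is_wstar_lim_def
proof (intro conj_cong refl iffI allI impI)
  fix \<phi> :: "real \<Rightarrow> real"
  assume W: "\<forall>\<phi>. set_integrable lebesgue {0..} \<phi> \<longrightarrow>
      ((\<lambda>s. LINT x:{0..}|lebesgue. g (x + s) * \<phi> x) \<longlongrightarrow> (LINT x:{0..}|lebesgue. G x * \<phi> x)) F"
    and [measurable]: "\<phi> \<in> borel_measurable borel" and "integrable lborel \<phi>" and \<phi>0: "\<forall>x<0. \<phi> x = 0"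
  have self: "indicator {0..} x * \<phi> x = \<phi> x" for x using \<phi>0 by (auto simp: indicator_def)
  have "set_integrable lebesgue {0..} \<phi>"
    using \<open>integrable lborel \<phi>\<close> by (simp add: set_integrable_def self integrable_lebesgue_iff_lborel)
  with W have lim: "((\<lambda>s. LINT x:{0..}|lebesgue. g (x + s) * \<phi> x) \<longlongrightarrow> (LINT x:{0..}|lebesgue. G x * \<phi> x)) F"
    by blast
  have eq: "(LINT x:{0..}|lebesgue. K x * \<phi> x) = (\<integral>x. K x * \<phi> x \<partial>lborel)"
    if "K \<in> borel_measurable borel" for K
    by (rule set_integral_nonneg_eq_lborel) (auto simp: self that borel_measurable_lebesgueI)
  have eq_shift: "(LINT x:{0..}|lebesgue. g (x + s) * \<phi> x) = (\<integral>x. g (x + s) * \<phi> x \<partial>lborel)" for s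
    by (rule eq) simp
  show "((\<lambda>s. \<integral>x. g (x + s) * \<phi> x \<partial>lborel) \<longlongrightarrow> (\<integral>x. G x * \<phi> x \<partial>lborel)) F"
    using lim unfolding eq[of G, OF \<open>G \<in> borel_measurable borel\<close>] eq_shift .
next
  fix \<phi> :: "real \<Rightarrow> real"
  assume B: "\<forall>\<phi>. \<phi> \<in> borel_measurable borel \<longrightarrow> integrable lborel \<phi> \<longrightarrow> (\<forall>x<0. \<phi> x = 0) \<longrightarrow>
      ((\<lambda>s. \<integral>x. g (x + s) * \<phi> x \<partial>lborel) \<longlongrightarrow> (\<integral>x. G x * \<phi> x \<partial>lborel)) F"
    and \<phi>: "set_integrable lebesgue {0..} \<phi>"
  obtain \<phi>0 where [measurable]: "\<phi>0 \<in> borel_measurable borel" and "integrable lborel \<phi>0"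
    "\<And>x. x < 0 \<Longrightarrow> \<phi>0 x = 0" and ae: "AE x in lebesgue. indicator {0..} x * \<phi> x = \<phi>0 x"
    using set_integrable_nonneg_borel_representative[OF \<phi>] by blast
  have m: "(\<lambda>x. indicator {0..} x * \<phi> x) \<in> borel_measurable lebesgue"
    using \<phi> by (auto simp: set_integrable_def)
  show "((\<lambda>s. LINT x:{0..}|lebesgue. g (x + s) * \<phi> x) \<longlongrightarrow> (LINT x:{0..}|lebesgue. G x * \<phi> x)) F"
    using B \<open>integrable lborel \<phi>0\<close> \<open>\<And>x. x < 0 \<Longrightarrow> \<phi>0 x = 0\<close>
    by (simp add: set_integral_nonneg_eq_lborel[OF ae m])
qed

lemma is_wstar_lim_cong_lim:
  assumes W: "is_wstar_lim F g G" and G': "Linf_pos G'" and ae: "AE x in lebesgue. x \<ge> 0 \<longrightarrow> G x = G' x"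
  shows "is_wstar_lim F g G'"
  unfolding is_wstar_lim_def
proof (intro conjI allI impI)
  fix \<phi> :: "real \<Rightarrow> real" assume \<phi>: "set_integrable lebesgue {0..} \<phi>"
  have "set_borel_measurable lebesgue {0..} (\<lambda>x. G' x * \<phi> x)"
    using set_integrable_Linf_pos_mult[OF G' \<phi>] by (simp add: set_integrable_def set_borel_measurable_def)
  then have eq: "(LINT x:{0..}|lebesgue. G x * \<phi> x) = (LINT x:{0..}|lebesgue. G' x * \<phi> x)"
    by (rule set_integral_lebesgue_cong_AE) (use ae in auto)
  from W \<phi> have "((\<lambda>s. LINT x:{0..}|lebesgue. g (x + s) * \<phi> x) \<longlongrightarrow> (LINT x:{0..}|lebesgue. G x * \<phi> x)) F"
    unfolding is_wstar_lim_def by blast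
  then show "((\<lambda>s. LINT x:{0..}|lebesgue. g (x + s) * \<phi> x) \<longlongrightarrow> (LINT x:{0..}|lebesgue. G' x * \<phi> x)) F"
    unfolding eq .
qed (fact G')

lemma is_wstar_lim_cong_fun:
  fixes f f' :: "real \<Rightarrow> real"
  assumes ae: "AE x in lebesgue. x \<ge> 0 \<longrightarrow> f x = f' x" and [measurable]: "f' \<in> borel_measurable borel"
    and ev: "\<forall>\<^sub>F s in F. s \<ge> 0"
  shows "is_wstar_lim F f = is_wstar_lim F f'"
proof -
  have eq: "(LINT x:{0..}|lebesgue. f (x + s) * \<phi> x) = (LINT x:{0..}|lebesgue. f' (x + s) * \<phi> x)"
    if s: "s \<ge> 0" and \<phi>: "set_integrable lebesgue {0..} \<phi>" for s \<phi>
  proof (rule set_integral_lebesgue_cong_AE)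
    have "(\<lambda>x. f' (x + s)) \<in> borel_measurable lebesgue" by (rule borel_measurable_lebesgueI) simp
    moreover have "(\<lambda>x. indicator {0..} x * \<phi> x) \<in> borel_measurable lebesgue"
      using \<phi> by (auto simp: set_integrable_def)
    ultimately have "(\<lambda>x. f' (x + s) * (indicator {0..} x * \<phi> x)) \<in> borel_measurable lebesgue"
      by (rule borel_measurable_times)
    then show "set_borel_measurable lebesgue {0..} (\<lambda>x. f' (x + s) * \<phi> x)"
      by (simp add: set_borel_measurable_def mult_ac)
    show "AE x in lebesgue. x \<in> {0..} \<longrightarrow> f (x + s) * \<phi> x = f' (x + s) * \<phi> x"
      using AE_lebesgue_shift[OF ae, of s] by eventually_elim (use s in auto)
  qed
  show ?thesis
    unfolding is_wstar_lim_def fun_eq_iff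
    by (intro allI conj_cong refl all_cong imp_cong tendsto_cong) (use ev eq in \<open>auto elim: eventually_mono\<close>)
qed

lemma is_wstar_lim_shift:
  fixes g H :: "real \<Rightarrow> real" and d :: real
  assumes W: "is_wstar_lim F g H" and [measurable]: "g \<in> borel_measurable borel" "H \<in> borel_measurable borel"
    and d: "d \<ge> 0"
  shows "is_wstar_lim (filtermap (\<lambda>s. s + d) F) g (\<lambda>y. H (y + d))"
proof -
  from W obtain C where "AE x in lebesgue. x \<in> {0..} \<longrightarrow> \<bar>H x\<bar> \<le> C"
    unfolding is_wstar_lim_def Linf_pos_def by auto
  from AE_lebesgue_shift[OF this, of d] have "Linf_pos (\<lambda>y. H (y + d))"
    by (intro Linf_posI[where C = C]) (measurable, use d in \<open>auto elim: eventually_mono\<close>)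
  moreover have "((\<lambda>s. \<integral>x. g (x + (s + d)) * \<phi> x \<partial>lborel) \<longlongrightarrow> (\<integral>x. H (x + d) * \<phi> x \<partial>lborel)) F"
    if [measurable]: "\<phi> \<in> borel_measurable borel" and \<phi>: "integrable lborel \<phi>" and \<phi>0: "\<forall>x<0. \<phi> x = 0" for \<phi>
  proof -
    define \<psi> where "\<psi> z = \<phi> (z - d)" for z
    have "\<psi> \<in> borel_measurable borel" unfolding \<psi>_def by measurable
    moreover have "\<forall>z<0. \<psi> z = 0" using \<phi>0 d by (auto simp: \<psi>_def)
    moreover have "integrable lborel \<psi>"
      using lborel_integrable_real_affine[OF \<phi>, of 1 "- d"] unfolding \<psi>_def by simp
    ultimately have lim: "((\<lambda>s. \<integral>z. g (z + s) * \<psi> z \<partial>lborel) \<longlongrightarrow> (\<integral>z. H z * \<psi> z \<partial>lborel)) F"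
      using W by (simp add: is_wstar_lim_borel_iff)
    have tr: "(\<integral>z. K z * \<psi> z \<partial>lborel) = (\<integral>x. K (x + d) * \<phi> x \<partial>lborel)" for K
      using lborel_integral_real_affine[of 1 "\<lambda>z. K z * \<psi> z" d] by (simp add: \<psi>_def add.commute)
    show ?thesis using lim unfolding tr by (simp add: ac_simps)
  qed
  ultimately show ?thesis by (simp add: is_wstar_lim_borel_iff filterlim_filtermap)
qed

lemma wstar_lim_AE_eq:
  assumes "is_wstar_lim F g G" "F \<noteq> bot"
  shows "AE x in lebesgue. x \<ge> 0 \<longrightarrow> wstar_lim F g x = G x"
  using is_wstar_lim_unique[OF assms(2) someI[of "is_wstar_lim F g", OF assms(1)] assms(1)]
  by (simp add: wstar_lim_def)

section \<open>Existence of weak-star limits\<close>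

lemma tendsto_integral_mult_L1_approx:
  fixes f :: "'b \<Rightarrow> 'a \<Rightarrow> real" and G \<psi> :: "'a \<Rightarrow> real" and \<psi>s :: "nat \<Rightarrow> 'a \<Rightarrow> real"
  assumes \<psi>: "integrable M \<psi>" and \<psi>s: "\<And>i. integrable M (\<psi>s i)"
    and L1: "(\<lambda>i. \<integral>x. \<bar>\<psi> x - \<psi>s i x\<bar> \<partial>M) \<longlonglongrightarrow> 0"
    and f: "\<And>s. f s \<in> borel_measurable M" "\<And>s x. x \<in> space M \<Longrightarrow> \<bar>f s x\<bar> \<le> C"
    and G: "G \<in> borel_measurable M" "\<And>x. x \<in> space M \<Longrightarrow> \<bar>G x\<bar> \<le> C"
    and lim: "\<And>i. ((\<lambda>s. \<integral>x. f s x * \<psi>s i x \<partial>M) \<longlongrightarrow> (\<integral>x. G x * \<psi>s i x \<partial>M)) F"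
  shows "((\<lambda>s. \<integral>x. f s x * \<psi> x \<partial>M) \<longlongrightarrow> (\<integral>x. G x * \<psi> x \<partial>M)) F"
proof (rule tendsto_by_approximation)
  fix e :: real assume e: "e > 0"
  then have "e / (\<bar>C\<bar> + 1) > 0" by simp
  with L1 obtain i where i: "\<bar>(\<integral>x. \<bar>\<psi> x - \<psi>s i x\<bar> \<partial>M)\<bar> < e / (\<bar>C\<bar> + 1)"
    using LIMSEQ_D by fastforce
  have "\<bar>C\<bar> * (\<integral>x. \<bar>\<psi> x - \<psi>s i x\<bar> \<partial>M) \<le> \<bar>C\<bar> * (e / (\<bar>C\<bar> + 1))"
    using i by (intro mult_left_mono) simp_all
  also have "\<dots> \<le> e" using e by (simp add: field_simps)
  finally have close: "\<bar>C\<bar> * (\<integral>x. \<bar>\<psi> x - \<psi>s i x\<bar> \<partial>M) \<le> e" .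
  have small: "\<bar>(\<integral>x. B x * \<psi> x \<partial>M) - (\<integral>x. B x * \<psi>s i x \<partial>M)\<bar> \<le> e"
    if "B \<in> borel_measurable M" "\<And>x. x \<in> space M \<Longrightarrow> \<bar>B x\<bar> \<le> C" for B
  proof -
    have "\<bar>(\<integral>x. B x * \<psi> x \<partial>M) - (\<integral>x. B x * \<psi>s i x \<partial>M)\<bar> \<le> \<bar>C\<bar> * (\<integral>x. \<bar>\<psi> x - \<psi>s i x\<bar> \<partial>M)"
      by (rule integral_bounded_mult_diff_le[OF \<psi> \<psi>s that(1)]) (use that(2) in \<open>meson abs_ge_self order_trans\<close>)
    with close show ?thesis by linarith
  qed
  show "\<exists>b Lb. (b \<longlongrightarrow> Lb) F \<and> (\<forall>\<^sub>F s in F. \<bar>(\<integral>x. f s x * \<psi> x \<partial>M) - b s\<bar> \<le> e) \<and>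
      \<bar>(\<integral>x. G x * \<psi> x \<partial>M) - Lb\<bar> \<le> e"
    using lim[of i] small[OF f] small[OF G] by (blast intro: always_eventually)
qed

lemma (in finite_measure) AE_le_const_if_set_nn_integral_le:
  fixes g :: "'a \<Rightarrow> ennreal"
  assumes [measurable]: "g \<in> borel_measurable M" and "C \<ge> 0"
    and le: "\<And>A. A \<in> sets M \<Longrightarrow> (\<integral>\<^sup>+x. g x * indicator A x \<partial>M) \<le> ennreal (C * measure M A)"
  shows "AE x in M. g x \<le> ennreal C"
proof -
  define A where "A = {x \<in> space M. ennreal C < g x}"
  have A[measurable]: "A \<in> sets M" unfolding A_def by measurable
  have "A \<in> null_sets M"
  proof (rule ccontr)
    assume nA: "A \<notin> null_sets M"
    have fin: "(\<integral>\<^sup>+x. ennreal C * indicator A x \<partial>M) = ennreal (C * measure M A)"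
      using A \<open>C \<ge> 0\<close> by (simp add: nn_integral_cmult_indicator emeasure_eq_measure ennreal_mult)
    have "(\<integral>\<^sup>+x. ennreal C * indicator A x \<partial>M) < (\<integral>\<^sup>+x. g x * indicator A x \<partial>M)"
    proof (rule nn_integral_less)
      show "AE x in M. ennreal C * indicator A x \<le> g x * indicator A x"
        by (rule AE_I2) (auto simp: A_def indicator_def less_imp_le)
      show "\<not> (AE x in M. g x * indicator A x \<le> ennreal C * indicator A x)"
      proof
        assume "AE x in M. g x * indicator A x \<le> ennreal C * indicator A x"
        then have "AE x in M. x \<notin> A" by eventually_elim (auto simp: A_def indicator_def split: if_splits)
        with nA A show False by (simp add: AE_iff_null_sets)
      qed
    qed (use fin in simp_all)
    with le[OF A] fin show False by simp
  qed
  then have "AE x in M. x \<notin> A" by (rule AE_not_in)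
  then show ?thesis using AE_space by eventually_elim (auto simp: A_def not_less)
qed

lemma indicator_disjoint_family_sums:
  fixes A :: "nat \<Rightarrow> 'a set" and c :: real
  assumes "disjoint_family A"
  shows "(\<lambda>i. indicator (A i) x * c) sums (indicator (\<Union>i. A i) x * c)"
proof (cases "x \<in> (\<Union>i. A i)")
  case True
  then obtain j where j: "x \<in> A j" by auto
  have "(\<lambda>i. indicator (A i) x * c) = (\<lambda>i. if i = j then c else 0)"
    using assms j by (auto simp: fun_eq_iff indicator_def disjoint_family_on_def)
  then show ?thesis using True j sums_single[of j "\<lambda>_. c"] by simp
qed (simp add: indicator_def)

text \<open>Weighting by \<open>e\<^sup>-\<^sup>x\<close> makes \<open>A \<mapsto> lim\<^sub>\<omega> \<integral>\<^sub>A f(x + s) e\<^sup>-\<^sup>x dx\<close> a finite measure, absolutely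
  continuous with respect to the exponential distribution.\<close>
definition exp_measure :: "real measure" where
  "exp_measure = density lborel (erlang_density 0 1)"

interpretation exp_measure: prob_space exp_measure
  unfolding exp_measure_def by (rule prob_space_erlang_density) simp

lemma sets_exp_measure [simp, measurable_cong]: "sets exp_measure = sets borel"
  by (simp add: exp_measure_def)

lemma space_exp_measure [simp]: "space exp_measure = UNIV"
  by (simp add: exp_measure_def)

lemma borel_measurable_exp_measure [simp]: "g \<in> borel_measurable exp_measure \<longleftrightarrow> g \<in> borel_measurable borel"
  by (simp add: measurable_def)

lemma integral_exp_measure:
  fixes H \<phi> :: "real \<Rightarrow> real"
  assumes [measurable]: "H \<in> borel_measurable borel" "\<phi> \<in> borel_measurable borel"
    and \<phi>0: "\<And>x. x < 0 \<Longrightarrow> \<phi> x = 0"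
  shows "(\<integral>x. H x * (\<phi> x * exp x) \<partial>exp_measure) = (\<integral>x. H x * \<phi> x \<partial>lborel)"
proof -
  have "(\<integral>x. H x * (\<phi> x * exp x) \<partial>exp_measure) =
      (\<integral>x. erlang_density 0 1 x *\<^sub>R (H x * (\<phi> x * exp x)) \<partial>lborel)"
    unfolding exp_measure_def by (rule integral_density) auto
  also have "\<dots> = (\<integral>x. H x * \<phi> x \<partial>lborel)"
    by (rule Bochner_Integration.integral_cong) (auto simp: erlang_density_def \<phi>0 exp_minus field_simps)
  finally show ?thesis .
qed

lemma integrable_exp_measure:
  fixes \<phi> :: "real \<Rightarrow> real"
  assumes [measurable]: "\<phi> \<in> borel_measurable borel" and "integrable lborel \<phi>"
    and \<phi>0: "\<And>x. x < 0 \<Longrightarrow> \<phi> x = 0"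
  shows "integrable exp_measure (\<lambda>x. \<phi> x * exp x)"
  unfolding exp_measure_def
proof (subst integrable_density)
  show "integrable lborel (\<lambda>x. erlang_density 0 1 x *\<^sub>R (\<phi> x * exp x))"
    by (rule Bochner_Integration.integrable_cong[THEN iffD1, OF refl _ assms(2)])
      (auto simp: erlang_density_def \<phi>0 exp_minus field_simps)
qed auto

definition translate_mass :: "(real \<Rightarrow> real) \<Rightarrow> real set \<Rightarrow> real \<Rightarrow> real" where
  "translate_mass f A s = (\<integral>x. indicator A x * f (x + s) \<partial>exp_measure)"

definition limit_mass :: "(real \<Rightarrow> real) \<Rightarrow> real filter \<Rightarrow> real set \<Rightarrow> real" where
  "limit_mass f F A = Lim F (translate_mass f A)"

context
  fixes f :: "real \<Rightarrow> real" and C :: real and F :: "real filter"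
  assumes f [measurable]: "f \<in> borel_measurable borel" and f_nonneg: "\<And>x. 0 \<le> f x"
    and f_le: "\<And>x. f x \<le> C" and U: "ultrafilter_on F"
begin

lemma integrable_indicator_translate:
  assumes [measurable]: "A \<in> sets borel"
  shows "integrable exp_measure (\<lambda>x. indicator A x * f (x + s))"
proof (rule exp_measure.integrable_const_bound[where B = C])
  have "norm (indicator A x * f (x + s)) \<le> C" for x
    using f_nonneg[of "x + s"] f_le[of "x + s"] by (auto simp: indicator_def)
  then show "AE x in exp_measure. norm (indicator A x * f (x + s)) \<le> C" by simp
qed simp

lemma translate_mass_bounds:
  assumes [measurable]: "A \<in> sets borel"
  shows "0 \<le> translate_mass f A s" "translate_mass f A s \<le> C * measure exp_measure A"
proof -
  show "0 \<le> translate_mass f A s" unfolding translate_mass_def by (rule integral_nonneg_AE) (simp add: f_nonneg)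
  have "integrable exp_measure (indicator A :: real \<Rightarrow> real)"
    by (rule integrable_real_indicator) (simp_all add: exp_measure.emeasure_finite less_top[symmetric])
  then have "translate_mass f A s \<le> (\<integral>x. indicator A x * C \<partial>exp_measure)" unfolding translate_mass_def
    by (rule integral_mono[OF integrable_indicator_translate[OF assms] integrable_mult_left])
      (auto simp: f_le indicator_def)
  then show "translate_mass f A s \<le> C * measure exp_measure A" by (simp add: mult.commute)
qed

lemma limit_mass_tendsto:
  assumes "A \<in> sets borel" shows "(translate_mass f A \<longlongrightarrow> limit_mass f F A) F"
proof -
  have "\<forall>\<^sub>F s in F. translate_mass f A s \<in> {0..C * measure exp_measure A}"
    using translate_mass_bounds[OF assms] by (auto intro: always_eventually)
  then obtain L where "(translate_mass f A \<longlongrightarrow> L) F" using ultrafilter_on_convergent_bounded[OF U] by blast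
  moreover from this have "limit_mass f F A = L"
    unfolding limit_mass_def using ultrafilter_on_neq_bot[OF U] by (rule tendsto_Lim[rotated])
  ultimately show ?thesis by simp
qed

lemma limit_mass_bounds:
  assumes "A \<in> sets borel" shows "0 \<le> limit_mass f F A" "limit_mass f F A \<le> C * measure exp_measure A"
  using translate_mass_bounds[OF assms] ultrafilter_on_neq_bot[OF U]
  by (auto intro!: tendsto_lowerbound[OF limit_mass_tendsto[OF assms]] tendsto_upperbound[OF limit_mass_tendsto[OF assms]]
      always_eventually)

lemma limit_mass_null: "A \<in> null_sets exp_measure \<Longrightarrow> limit_mass f F A = 0"
  using limit_mass_bounds[of A] by (simp add: exp_measure.emeasure_eq_measure null_sets_def)

lemma limit_mass_sums:
  fixes A :: "nat \<Rightarrow> real set"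
  assumes A: "range A \<subseteq> sets borel" and d: "disjoint_family A"
  shows "(\<lambda>i. limit_mass f F (A i)) sums limit_mass f F (\<Union>i. A i)"
proof -
  have UA: "(\<Union>i. A i) \<in> sets borel" using A by auto
  have "(\<lambda>i. measure exp_measure (A i)) sums measure exp_measure (\<Union>i. A i)"
    by (rule measure_UNION) (use A d in \<open>auto simp: exp_measure.emeasure_finite\<close>)
  then have sm: "summable (\<lambda>i. C * measure exp_measure (A i))" by (intro summable_mult) (simp add: sums_summable)
  have translate_sum: "translate_mass f (\<Union>i. A i) s = (\<Sum>i. translate_mass f (A i) s)" for s
  proof -
    have "translate_mass f (\<Union>i. A i) s = (\<integral>x. (\<Sum>i. indicator (A i) x * f (x + s)) \<partial>exp_measure)"
      unfolding translate_mass_def using indicator_disjoint_family_sums[OF d] by (simp add: sums_iff)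
    also have "\<dots> = (\<Sum>i. translate_mass f (A i) s)" unfolding translate_mass_def
    proof (rule integral_suminf)
      show "integrable exp_measure (\<lambda>x. indicator (A i) x * f (x + s))" for i
        using A by (intro integrable_indicator_translate) auto
      show "AE x in exp_measure. summable (\<lambda>i. norm (indicator (A i) x * f (x + s)))"
        using indicator_disjoint_family_sums[OF d, of _ "\<bar>f (x + s)\<bar>" for x]
        by (auto simp: abs_mult sums_iff intro!: AE_I2)
      have "(\<integral>x. norm (indicator (A i) x * f (x + s)) \<partial>exp_measure) = translate_mass f (A i) s" for i
        unfolding translate_mass_def using f_nonneg by (intro Bochner_Integration.integral_cong) (auto simp: abs_mult)
      then show "summable (\<lambda>i. \<integral>x. norm (indicator (A i) x * f (x + s)) \<partial>exp_measure)"
        using translate_mass_bounds A by (auto intro!: summable_comparison_test'[OF sm])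
    qed
    finally show ?thesis .
  qed
  have "((\<lambda>s. \<Sum>i. translate_mass f (A i) s) \<longlongrightarrow> (\<Sum>i. limit_mass f F (A i))) F"
    using A translate_mass_bounds
    by (intro tendsto_suminf_dominated[OF ultrafilter_on_neq_bot[OF U] _ _ sm] limit_mass_tendsto) auto
  then have "limit_mass f F (\<Union>i. A i) = (\<Sum>i. limit_mass f F (A i))"
    unfolding translate_sum[abs_def, symmetric] by (rule tendsto_unique[OF ultrafilter_on_neq_bot[OF U] limit_mass_tendsto[OF UA]])
  moreover have "summable (\<lambda>i. limit_mass f F (A i))"
    by (rule summable_comparison_test'[OF sm]) (use A limit_mass_bounds in auto)
  ultimately show ?thesis by (simp add: sums_iff)
qed

lemma limit_mass_has_density:
  obtains g where "g \<in> borel_measurable borel"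
    "\<And>A. A \<in> sets borel \<Longrightarrow> (\<integral>\<^sup>+x. g x * indicator A x \<partial>exp_measure) = ennreal (limit_mass f F A)"
proof -
  define \<nu> where "\<nu> A = ennreal (limit_mass f F A)" for A
  define N where "N = measure_of UNIV (sets borel) \<nu>"
  have sa: "sigma_algebra UNIV (sets borel :: real set set)"
    using sets.sigma_algebra_axioms[of borel] by simp
  have pos: "positive (sets borel) \<nu>"
    unfolding positive_def \<nu>_def using limit_mass_null[of "{}"] by simp
  have ca: "countably_additive (sets borel) \<nu>"
    unfolding countably_additive_def
  proof (intro allI impI)
    fix A :: "nat \<Rightarrow> real set"
    assume A: "range A \<subseteq> sets borel" "disjoint_family A"
    note s = limit_mass_sums[OF A]
    have "(\<Sum>i. \<nu> (A i)) = ennreal (\<Sum>i. limit_mass f F (A i))"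
      unfolding \<nu>_def by (rule suminf_ennreal2) (use A limit_mass_bounds s in \<open>auto simp: sums_iff\<close>)
    also have "\<dots> = \<nu> (\<Union>i. A i)" using s by (simp add: \<nu>_def sums_iff)
    finally show "(\<Sum>i. \<nu> (A i)) = \<nu> (\<Union>i. A i)" .
  qed
  have eN: "emeasure N A = \<nu> A" if "A \<in> sets borel" for A
    unfolding N_def by (rule emeasure_measure_of_sigma[OF sa pos ca that])
  have sN: "sets N = sets exp_measure"
    unfolding N_def using sa by (simp add: sigma_algebra.sigma_sets_eq)
  have "absolutely_continuous exp_measure N"
    unfolding absolutely_continuous_def
    using eN limit_mass_null sN by (auto simp: null_sets_def \<nu>_def)
  then obtain g where g: "g \<in> borel_measurable exp_measure" "density exp_measure g = N"
    using exp_measure.Radon_Nikodym[OF _ sN] by blast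
  show ?thesis
  proof (rule that)
    show "g \<in> borel_measurable borel" using g(1) by simp
    fix A :: "real set" assume A: "A \<in> sets borel"
    have "(\<integral>\<^sup>+x. g x * indicator A x \<partial>exp_measure) = emeasure (density exp_measure g) A"
      by (rule emeasure_density[symmetric]) (use g(1) A in auto)
    also have "\<dots> = ennreal (limit_mass f F A)" using g(2) eN[OF A] by (simp add: \<nu>_def)
    finally show "(\<integral>\<^sup>+x. g x * indicator A x \<partial>exp_measure) = ennreal (limit_mass f F A)" .
  qed
qed


lemma limit_mass_bounded_density:
  obtains G where "G \<in> borel_measurable borel" "\<And>x. 0 \<le> G x" "\<And>x. G x \<le> C"
    "\<And>A. A \<in> sets borel \<Longrightarrow> (\<integral>x. indicator A x * G x \<partial>exp_measure) = limit_mass f F A"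
proof -
  obtain g where [measurable]: "g \<in> borel_measurable borel"
    and g: "\<And>A. A \<in> sets borel \<Longrightarrow> (\<integral>\<^sup>+x. g x * indicator A x \<partial>exp_measure) = ennreal (limit_mass f F A)"
    using limit_mass_has_density by blast
  have C: "0 \<le> C" using f_nonneg[of 0] f_le[of 0] by simp
  have g_le: "AE x in exp_measure. g x \<le> ennreal C"
    by (rule exp_measure.AE_le_const_if_set_nn_integral_le[OF _ C]) (auto simp: g intro!: ennreal_leI limit_mass_bounds)
  define G where "G x = min C (enn2real (g x))" for x
  show ?thesis
  proof (rule that)
    show "G \<in> borel_measurable borel" unfolding G_def by measurable
    show "0 \<le> G x" "G x \<le> C" for x unfolding G_def using C by simp_all
    fix A :: "real set" assume A [measurable]: "A \<in> sets borel"
    have "(\<integral>x. indicator A x * G x \<partial>exp_measure) = (\<integral>x. indicator A x * enn2real (g x) \<partial>exp_measure)"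
    proof (rule integral_cong_AE)
      show "AE x in exp_measure. indicator A x * G x = indicator A x * enn2real (g x)"
        using g_le
      proof eventually_elim
        case (elim x)
        then have "enn2real (g x) \<le> C" using C enn2real_mono[OF elim] by simp
        then show ?case by (simp add: G_def)
      qed
    qed (simp_all add: G_def)
    also have "\<dots> = enn2real (\<integral>\<^sup>+x. ennreal (indicator A x * enn2real (g x)) \<partial>exp_measure)"
      by (rule integral_eq_nn_integral) auto
    also have "(\<integral>\<^sup>+x. ennreal (indicator A x * enn2real (g x)) \<partial>exp_measure) =
        (\<integral>\<^sup>+x. g x * indicator A x \<partial>exp_measure)"
      by (rule nn_integral_cong_AE)
        (use g_le in \<open>eventually_elim, auto simp: indicator_def ennreal_enn2real_if top_unique\<close>)
    finally show "(\<integral>x. indicator A x * G x \<partial>exp_measure) = limit_mass f F A"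
      using limit_mass_bounds[OF A] by (simp add: g)
  qed
qed

lemma tendsto_translate_integral_exp_measure:
  assumes [measurable]: "G \<in> borel_measurable borel" and G: "\<And>x. 0 \<le> G x" "\<And>x. G x \<le> C"
    and G_mass: "\<And>A. A \<in> sets borel \<Longrightarrow> (\<integral>x. indicator A x * G x \<partial>exp_measure) = limit_mass f F A"
    and \<psi>: "integrable exp_measure \<psi>"
  shows "((\<lambda>s. \<integral>x. f (x + s) * \<psi> x \<partial>exp_measure) \<longlongrightarrow> (\<integral>x. G x * \<psi> x \<partial>exp_measure)) F"
  using \<psi>
proof (induct rule: integrable_induct)
  case (base A c)
  then have A: "A \<in> sets borel" by simp
  have "(\<integral>x. f (x + s) * (indicator A x *\<^sub>R c) \<partial>exp_measure) = translate_mass f A s * c" for s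
    unfolding translate_mass_def by (simp add: ac_simps)
  moreover have "(\<integral>x. G x * (indicator A x *\<^sub>R c) \<partial>exp_measure) = limit_mass f F A * c"
    using G_mass[OF A] by (simp add: ac_simps)
  ultimately show ?case by (simp add: tendsto_mult_right limit_mass_tendsto[OF A])
next
  case (add \<psi>1 \<psi>2)
  have f_bound: "\<bar>f (x + s)\<bar> \<le> C" and G_bound: "\<bar>G x\<bar> \<le> C" for x s
    using f_nonneg[of "x + s"] f_le[of "x + s"] G[of x] by simp_all
  have "integrable exp_measure (\<lambda>x. f (x + s) * \<psi> x)" "integrable exp_measure (\<lambda>x. G x * \<psi> x)"
    if "integrable exp_measure \<psi>" for \<psi> s
    using that f_bound G_bound by (auto intro!: integrable_bounded_mult)
  with add show ?case by (simp add: distrib_left tendsto_add)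
next
  case (lim \<psi> \<psi>s)
  have "(\<lambda>i. \<integral>x. \<bar>\<psi> x - \<psi>s i x\<bar> \<partial>exp_measure) \<longlonglongrightarrow> (\<integral>x. 0 \<partial>exp_measure)"
  proof (rule integral_dominated_convergence[where w = "\<lambda>x. 3 * \<bar>\<psi> x\<bar>"])
    show "AE x in exp_measure. (\<lambda>i. \<bar>\<psi> x - \<psi>s i x\<bar>) \<longlonglongrightarrow> 0"
    proof (rule AE_I2)
      fix x assume "x \<in> space exp_measure"
      then have "(\<lambda>i. \<psi> x - \<psi>s i x) \<longlonglongrightarrow> \<psi> x - \<psi> x" by (intro tendsto_diff tendsto_const lim(3))
      then show "(\<lambda>i. \<bar>\<psi> x - \<psi>s i x\<bar>) \<longlonglongrightarrow> 0" using tendsto_rabs by fastforce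
    qed
    show "AE x in exp_measure. norm \<bar>\<psi> x - \<psi>s i x\<bar> \<le> 3 * \<bar>\<psi> x\<bar>" for i
    proof (rule AE_I2)
      fix x assume "x \<in> space exp_measure"
      then have "\<bar>\<psi>s i x\<bar> \<le> 2 * \<bar>\<psi> x\<bar>" using lim(4)[of x i] by simp
      then show "norm \<bar>\<psi> x - \<psi>s i x\<bar> \<le> 3 * \<bar>\<psi> x\<bar>" by simp
    qed
  qed (use lim(1,5) in auto)
  then have L1: "(\<lambda>i. \<integral>x. \<bar>\<psi> x - \<psi>s i x\<bar> \<partial>exp_measure) \<longlonglongrightarrow> 0" by simp
  show ?case
  proof (rule tendsto_integral_mult_L1_approx[where f = "\<lambda>s x. f (x + s)" and C = C, OF lim(5) lim(1) L1])
    show "\<bar>f (x + s)\<bar> \<le> C" for s x using f_nonneg[of "x + s"] f_le[of "x + s"] by simp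
    show "\<bar>G x\<bar> \<le> C" for x using G[of x] by simp
  qed (use lim(2) in simp_all)
qed

lemma is_wstar_lim_exists_nonneg:
  "\<exists>G. G \<in> borel_measurable borel \<and> (\<forall>x. 0 \<le> G x \<and> G x \<le> C) \<and> is_wstar_lim F f G"
proof -
  obtain G where [measurable]: "G \<in> borel_measurable borel" and G: "\<And>x. 0 \<le> G x" "\<And>x. G x \<le> C"
    and G_mass: "\<And>A. A \<in> sets borel \<Longrightarrow> (\<integral>x. indicator A x * G x \<partial>exp_measure) = limit_mass f F A"
    using limit_mass_bounded_density by blast
  have "is_wstar_lim F f G"
    unfolding is_wstar_lim_borel_iff[OF f \<open>G \<in> borel_measurable borel\<close>]
  proof (intro conjI allI impI)
    show "Linf_pos G" by (rule Linf_posI[where C = C]) (use G in auto)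
    fix \<phi> :: "real \<Rightarrow> real"
    assume [measurable]: "\<phi> \<in> borel_measurable borel" and "integrable lborel \<phi>" and \<phi>0: "\<forall>x<0. \<phi> x = 0"
    then have "((\<lambda>s. \<integral>x. f (x + s) * (\<phi> x * exp x) \<partial>exp_measure) \<longlongrightarrow>
        (\<integral>x. G x * (\<phi> x * exp x) \<partial>exp_measure)) F"
      by (intro tendsto_translate_integral_exp_measure G G_mass integrable_exp_measure) auto
    then show "((\<lambda>s. \<integral>x. f (x + s) * \<phi> x \<partial>lborel) \<longlongrightarrow> (\<integral>x. G x * \<phi> x \<partial>lborel)) F"
      using \<phi>0 by (simp add: integral_exp_measure)
  qed
  with G show ?thesis by (blast intro: \<open>G \<in> borel_measurable borel\<close>)
qed

end

lemma is_wstar_lim_diff: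
  fixes g1 g2 G1 G2 :: "real \<Rightarrow> real"
  assumes W1: "is_wstar_lim F g1 G1" and W2: "is_wstar_lim F g2 G2"
    and [measurable]: "g1 \<in> borel_measurable borel" "g2 \<in> borel_measurable borel"
      "G1 \<in> borel_measurable borel" "G2 \<in> borel_measurable borel"
    and bounds: "\<And>x. \<bar>g1 x\<bar> \<le> C" "\<And>x. \<bar>g2 x\<bar> \<le> C" "\<And>x. \<bar>G1 x\<bar> \<le> C" "\<And>x. \<bar>G2 x\<bar> \<le> C"
  shows "is_wstar_lim F (\<lambda>x. g1 x - g2 x) (\<lambda>x. G1 x - G2 x)"
proof (subst is_wstar_lim_borel_iff, measurable, intro conjI allI impI)
  have "\<bar>G1 x - G2 x\<bar> \<le> C + C" for x using bounds(3)[of x] bounds(4)[of x] by linarith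
  then show "Linf_pos (\<lambda>x. G1 x - G2 x)" by (intro Linf_posI[where C = "C + C"]) simp_all
  fix \<phi> :: "real \<Rightarrow> real"
  assume [measurable]: "\<phi> \<in> borel_measurable borel" and \<phi>: "integrable lborel \<phi>" and \<phi>0: "\<forall>x<0. \<phi> x = 0"
  have int: "integrable lborel (\<lambda>x. B x * \<phi> x)" if "B \<in> borel_measurable borel" "\<And>x. \<bar>B x\<bar> \<le> C" for B
    using that by (intro integrable_bounded_mult[OF \<phi>]) auto
  have "((\<lambda>s. (\<integral>x. g1 (x + s) * \<phi> x \<partial>lborel) - (\<integral>x. g2 (x + s) * \<phi> x \<partial>lborel)) \<longlongrightarrow>
      (\<integral>x. G1 x * \<phi> x \<partial>lborel) - (\<integral>x. G2 x * \<phi> x \<partial>lborel)) F"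
    using W1 W2 \<phi> \<phi>0 by (intro tendsto_diff) (simp_all add: is_wstar_lim_borel_iff)
  then show "((\<lambda>s. \<integral>x. (g1 (x + s) - g2 (x + s)) * \<phi> x \<partial>lborel) \<longlongrightarrow> (\<integral>x. (G1 x - G2 x) * \<phi> x \<partial>lborel)) F"
    by (simp add: left_diff_distrib int bounds)
qed

lemma is_wstar_lim_exists:
  fixes f :: "real \<Rightarrow> real"
  assumes [measurable]: "f \<in> borel_measurable borel" and f_le: "\<And>x. \<bar>f x\<bar> \<le> C" and U: "ultrafilter_on F"
  shows "\<exists>G. G \<in> borel_measurable borel \<and> (\<forall>x. \<bar>G x\<bar> \<le> C) \<and> is_wstar_lim F f G"
proof -
  define fp where "fp x = max 0 (f x)" for x
  define fn where "fn x = max 0 (- f x)" for x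
  have [measurable]: "fp \<in> borel_measurable borel" "fn \<in> borel_measurable borel"
    unfolding fp_def fn_def by measurable
  have fpn: "0 \<le> fp x" "fp x \<le> C" "0 \<le> fn x" "fn x \<le> C" for x
    using f_le[of x] by (auto simp: fp_def fn_def)
  obtain Gp where [measurable]: "Gp \<in> borel_measurable borel" and Gp: "\<forall>x. 0 \<le> Gp x \<and> Gp x \<le> C" "is_wstar_lim F fp Gp"
    using is_wstar_lim_exists_nonneg[of fp C F] fpn U by auto
  obtain Gn where [measurable]: "Gn \<in> borel_measurable borel" and Gn: "\<forall>x. 0 \<le> Gn x \<and> Gn x \<le> C" "is_wstar_lim F fn Gn"
    using is_wstar_lim_exists_nonneg[of fn C F] fpn U by auto
  have "is_wstar_lim F (\<lambda>x. fp x - fn x) (\<lambda>x. Gp x - Gn x)"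
    by (rule is_wstar_lim_diff[OF Gp(2) Gn(2), where C = C]) (use fpn Gp Gn in auto)
  moreover have "(\<lambda>x. fp x - fn x) = f" by (auto simp: fp_def fn_def fun_eq_iff)
  moreover have "\<bar>Gp x - Gn x\<bar> \<le> C" for x using Gp(1) Gn(1) by (smt (verit))
  ultimately show ?thesis by (intro exI[of _ "\<lambda>x. Gp x - Gn x"]) auto
qed

section \<open>Convolution with an integrable kernel\<close>

lemma conv_lborel:
  fixes g k :: "real \<Rightarrow> real"
  assumes [measurable]: "g \<in> borel_measurable borel" "k \<in> borel_measurable borel"
  shows "conv g k x = (\<integral>u. g (x - u) * k u \<partial>lborel)"
  unfolding conv_def by (rule integral_lebesgue_eq_lborel) simp

lemma borel_measurable_conv [measurable]:
  fixes g k :: "real \<Rightarrow> real"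
  assumes [measurable]: "g \<in> borel_measurable borel" "k \<in> borel_measurable borel"
  shows "conv g k \<in> borel_measurable borel"
proof -
  have "(\<lambda>x. \<integral>u. g (x - u) * k u \<partial>lborel) \<in> borel_measurable lborel" by measurable
  moreover have "conv g k = (\<lambda>x. \<integral>u. g (x - u) * k u \<partial>lborel)" by (simp add: fun_eq_iff conv_lborel)
  ultimately show ?thesis by simp
qed

lemma abs_conv_le:
  fixes g k :: "real \<Rightarrow> real"
  assumes [measurable]: "g \<in> borel_measurable borel" "k \<in> borel_measurable borel"
    and k: "integrable lborel k" and g_le: "\<And>x. \<bar>g x\<bar> \<le> C"
  shows "\<bar>conv g k x\<bar> \<le> C * (\<integral>u. \<bar>k u\<bar> \<partial>lborel)"
proof -
  have "\<bar>conv g k x\<bar> \<le> (\<integral>u. \<bar>g (x - u) * k u\<bar> \<partial>lborel)"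
    using integral_norm_bound[of lborel "\<lambda>u. g (x - u) * k u"] by (simp add: conv_lborel)
  also have "\<dots> \<le> (\<integral>u. C * \<bar>k u\<bar> \<partial>lborel)"
    using k g_le by (intro integral_mono integrable_abs integrable_bounded_mult)
      (auto simp: abs_mult intro!: mult_right_mono)
  finally show ?thesis by simp
qed

lemma conv_eq_0_if_supports_nonneg:
  fixes g k :: "real \<Rightarrow> real"
  assumes "\<And>u. u < 0 \<Longrightarrow> g u = 0" "\<And>u. u < 0 \<Longrightarrow> k u = 0" "x < 0"
  shows "conv g k x = 0"
proof -
  have "(\<lambda>u. g (x - u) * k u) = (\<lambda>u. 0)" using assms by (force simp: fun_eq_iff not_less)
  then show ?thesis by (simp add: conv_def)
qed

lemma conv_translate: "conv (\<lambda>z. g (z + a)) k y = conv g k (y + a)"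
  by (simp add: conv_def algebra_simps)

text \<open>The adjoint of convolution by \<open>k\<close>.\<close>
definition correlation :: "(real \<Rightarrow> real) \<Rightarrow> (real \<Rightarrow> real) \<Rightarrow> real \<Rightarrow> real" where
  "correlation k \<phi> w = (\<integral>u. k u * \<phi> (w + u) \<partial>lborel)"

context
  fixes k \<phi> :: "real \<Rightarrow> real"
  assumes k [measurable]: "k \<in> borel_measurable borel" and k_int: "integrable lborel k"
    and \<phi> [measurable]: "\<phi> \<in> borel_measurable borel" and \<phi>_int: "integrable lborel \<phi>"
begin

lemma integrable_pair_correlation:
  fixes B :: "real \<Rightarrow> real"
  assumes [measurable]: "B \<in> borel_measurable borel" and B_le: "\<And>x. \<bar>B x\<bar> \<le> K"
  shows "integrable (lborel \<Otimes>\<^sub>M lborel) (\<lambda>(u, w). B w * k u * \<phi> (w + u))"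
proof (rule lborel_pair.Fubini_integrable)
  have \<phi>_shift: "integrable lborel (\<lambda>w. \<phi> (w + u))" for u
    using lborel_integrable_real_affine[OF \<phi>_int, of 1 u] by (simp add: add.commute)
  have norm_shift: "(\<integral>w. \<bar>\<phi> (w + u)\<bar> \<partial>lborel) = (\<integral>w. \<bar>\<phi> w\<bar> \<partial>lborel)" for u
    using lborel_integral_real_affine[of 1 "\<lambda>w. \<bar>\<phi> w\<bar>" u] by (simp add: add.commute)
  have K: "0 \<le> K" using B_le[of 0] by simp
  have int_w: "integrable lborel (\<lambda>w. B w * k u * \<phi> (w + u))" for u
    by (rule integrable_bounded_mult[OF \<phi>_shift, of _ "K * \<bar>k u\<bar>"])
      (auto simp: abs_mult intro!: mult_right_mono B_le)
  then show "AE u in lborel. integrable lborel (\<lambda>w. (\<lambda>(u, w). B w * k u * \<phi> (w + u)) (u, w))"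
    by simp
  have bound: "(\<integral>w. \<bar>B w * k u * \<phi> (w + u)\<bar> \<partial>lborel) \<le> K * (\<integral>w. \<bar>\<phi> w\<bar> \<partial>lborel) * \<bar>k u\<bar>" for u
  proof -
    have "(\<integral>w. \<bar>B w * k u * \<phi> (w + u)\<bar> \<partial>lborel) \<le> (\<integral>w. K * \<bar>k u\<bar> * \<bar>\<phi> (w + u)\<bar> \<partial>lborel)"
      by (rule integral_mono[OF integrable_abs[OF int_w]])
        (use \<phi>_shift B_le in \<open>auto simp: abs_mult intro!: mult_right_mono\<close>)
    then show ?thesis by (simp add: norm_shift mult_ac)
  qed
  show "integrable lborel (\<lambda>u. \<integral>w. norm ((\<lambda>(u, w). B w * k u * \<phi> (w + u)) (u, w)) \<partial>lborel)"
  proof (rule Bochner_Integration.integrable_bound[of _ "\<lambda>u. K * (\<integral>w. \<bar>\<phi> w\<bar> \<partial>lborel) * k u"])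
    show "(\<lambda>u. \<integral>w. norm ((\<lambda>(u, w). B w * k u * \<phi> (w + u)) (u, w)) \<partial>lborel) \<in> borel_measurable lborel"
      by measurable
    show "integrable lborel (\<lambda>u. K * (\<integral>w. \<bar>\<phi> w\<bar> \<partial>lborel) * k u)" using k_int by simp
  next
    show "AE u in lborel. norm (\<integral>w. norm ((\<lambda>(u, w). B w * k u * \<phi> (w + u)) (u, w)) \<partial>lborel) \<le>
        norm (K * (\<integral>w. \<bar>\<phi> w\<bar> \<partial>lborel) * k u)"
    proof (rule AE_I2)
      fix u
      have "0 \<le> (\<integral>w. \<bar>B w * k u * \<phi> (w + u)\<bar> \<partial>lborel)" by simp
      with bound[of u] K show "norm (\<integral>w. norm ((\<lambda>(u, w). B w * k u * \<phi> (w + u)) (u, w)) \<partial>lborel) \<le>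
          norm (K * (\<integral>w. \<bar>\<phi> w\<bar> \<partial>lborel) * k u)"
        by (simp add: abs_mult)
    qed
  qed
qed measurable

lemma integrable_pair_convolution:
  fixes B :: "real \<Rightarrow> real"
  assumes [measurable]: "B \<in> borel_measurable borel" and B_le: "\<And>x. \<bar>B x\<bar> \<le> K"
  shows "integrable (lborel \<Otimes>\<^sub>M lborel) (\<lambda>(y, u). B (y - u) * k u * \<phi> y)"
proof (rule lborel_pair.Fubini_integrable)
  have K: "0 \<le> K" using B_le[of 0] by simp
  have int_u: "integrable lborel (\<lambda>u. B (y - u) * k u * \<phi> y)" for y
  proof -
    have "integrable lborel (\<lambda>u. (B (y - u) * \<phi> y) * k u)"
      by (rule integrable_bounded_mult[OF k_int, of _ "K * \<bar>\<phi> y\<bar>"])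
        (auto simp: abs_mult intro!: mult_right_mono B_le)
    then show ?thesis by (simp add: mult_ac)
  qed
  then show "AE y in lborel. integrable lborel (\<lambda>u. (\<lambda>(y, u). B (y - u) * k u * \<phi> y) (y, u))"
    by simp
  have bound: "(\<integral>u. \<bar>B (y - u) * k u * \<phi> y\<bar> \<partial>lborel) \<le> K * (\<integral>u. \<bar>k u\<bar> \<partial>lborel) * \<bar>\<phi> y\<bar>" for y
  proof -
    have "(\<integral>u. \<bar>B (y - u) * k u * \<phi> y\<bar> \<partial>lborel) \<le> (\<integral>u. K * \<bar>\<phi> y\<bar> * \<bar>k u\<bar> \<partial>lborel)"
    proof (rule integral_mono[OF integrable_abs[OF int_u]])
      show "\<bar>B (y - u) * k u * \<phi> y\<bar> \<le> K * \<bar>\<phi> y\<bar> * \<bar>k u\<bar>" for u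
        using mult_right_mono[OF B_le[of "y - u"], of "\<bar>\<phi> y\<bar> * \<bar>k u\<bar>"] by (simp add: abs_mult mult_ac)
    qed (use k_int in simp)
    then show ?thesis by (simp add: mult_ac)
  qed
  show "integrable lborel (\<lambda>y. \<integral>u. norm ((\<lambda>(y, u). B (y - u) * k u * \<phi> y) (y, u)) \<partial>lborel)"
  proof (rule Bochner_Integration.integrable_bound[of _ "\<lambda>y. K * (\<integral>u. \<bar>k u\<bar> \<partial>lborel) * \<phi> y"])
    show "(\<lambda>y. \<integral>u. norm ((\<lambda>(y, u). B (y - u) * k u * \<phi> y) (y, u)) \<partial>lborel) \<in> borel_measurable lborel"
      by measurable
    show "integrable lborel (\<lambda>y. K * (\<integral>u. \<bar>k u\<bar> \<partial>lborel) * \<phi> y)" using \<phi>_int by simp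
  next
    show "AE y in lborel. norm (\<integral>u. norm ((\<lambda>(y, u). B (y - u) * k u * \<phi> y) (y, u)) \<partial>lborel) \<le>
        norm (K * (\<integral>u. \<bar>k u\<bar> \<partial>lborel) * \<phi> y)"
    proof (rule AE_I2)
      fix y
      have "0 \<le> (\<integral>u. \<bar>B (y - u) * k u * \<phi> y\<bar> \<partial>lborel)" "0 \<le> (\<integral>u. \<bar>k u\<bar> \<partial>lborel)" by simp_all
      with bound[of y] K show "norm (\<integral>u. norm ((\<lambda>(y, u). B (y - u) * k u * \<phi> y) (y, u)) \<partial>lborel) \<le>
          norm (K * (\<integral>u. \<bar>k u\<bar> \<partial>lborel) * \<phi> y)"
        by (simp add: abs_mult)
    qed
  qed
qed measurable

lemma borel_measurable_correlation [measurable]: "correlation k \<phi> \<in> borel_measurable borel"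
proof -
  have "(\<lambda>w. \<integral>u. k u * \<phi> (w + u) \<partial>lborel) \<in> borel_measurable lborel" by measurable
  then show ?thesis by (simp add: correlation_def[abs_def])
qed

lemma integrable_correlation: "integrable lborel (correlation k \<phi>)"
proof -
  have "integrable (lborel \<Otimes>\<^sub>M lborel) (\<lambda>(u, w). (\<lambda>_. 1) w * k u * \<phi> (w + u))"
    by (rule integrable_pair_correlation[of _ 1]) auto
  then have "integrable (lborel \<Otimes>\<^sub>M lborel) (\<lambda>(x, y). (\<lambda>(u, w). k u * \<phi> (w + u)) (y, x))"
    by (intro lborel_pair.integrable_product_swap) simp
  then have "integrable (lborel \<Otimes>\<^sub>M lborel) (\<lambda>(w, u). k u * \<phi> (w + u))"
    by (simp add: case_prod_beta)
  from lborel_pair.integrable_fst'[OF this] show ?thesis by (simp add: correlation_def[abs_def])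
qed

lemma integral_conv_mult_eq_correlation:
  fixes B :: "real \<Rightarrow> real"
  assumes [measurable]: "B \<in> borel_measurable borel" and B_le: "\<And>x. \<bar>B x\<bar> \<le> K"
  shows "(\<integral>y. conv B k y * \<phi> y \<partial>lborel) = (\<integral>w. B w * correlation k \<phi> w \<partial>lborel)"
proof -
  have "(\<integral>y. conv B k y * \<phi> y \<partial>lborel) = (\<integral>y. (\<integral>u. B (y - u) * k u * \<phi> y \<partial>lborel) \<partial>lborel)"
    by (simp add: conv_lborel)
  also have "\<dots> = (\<integral>u. (\<integral>y. B (y - u) * k u * \<phi> y \<partial>lborel) \<partial>lborel)"
    using lborel_pair.Fubini_integral[of "\<lambda>y u. B (y - u) * k u * \<phi> y"]
      integrable_pair_convolution[OF assms] by simp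
  also have "\<dots> = (\<integral>u. (\<integral>w. B w * k u * \<phi> (w + u) \<partial>lborel) \<partial>lborel)"
  proof (rule Bochner_Integration.integral_cong[OF refl])
    fix u
    show "(\<integral>y. B (y - u) * k u * \<phi> y \<partial>lborel) = (\<integral>w. B w * k u * \<phi> (w + u) \<partial>lborel)"
      using lborel_integral_real_affine[of 1 "\<lambda>y. B (y - u) * k u * \<phi> y" u] by (simp add: add.commute)
  qed
  also have "\<dots> = (\<integral>w. (\<integral>u. B w * k u * \<phi> (w + u) \<partial>lborel) \<partial>lborel)"
    using lborel_pair.Fubini_integral[of "\<lambda>u w. B w * k u * \<phi> (w + u)"]
      integrable_pair_correlation[OF assms] by simp
  also have "\<dots> = (\<integral>w. B w * correlation k \<phi> w \<partial>lborel)"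
    by (simp add: correlation_def mult.assoc)
  finally show ?thesis .
qed

end

section \<open>A Borel representative of \<open>g\<^sub>\<omega>\<close>\<close>

definition back_steps :: "real \<Rightarrow> nat" where
  "back_steps x = nat \<lceil>- x\<rceil>"

lemma back_steps_add_nonneg: "0 \<le> real (back_steps x) + x"
  unfolding back_steps_def by linarith

lemma back_steps_le: "- real M \<le> x \<Longrightarrow> back_steps x \<le> M"
  unfolding back_steps_def by (simp add: nat_le_iff ceiling_le_iff)

lemma back_steps_eq_0: "0 \<le> x \<Longrightarrow> back_steps x = 0"
  using back_steps_le[of 0 x] by simp

lemma measurable_back_steps [measurable]: "back_steps \<in> borel \<rightarrow>\<^sub>M count_space UNIV"
proof (subst measurable_count_space_eq2_countable, safe)
  fix a :: nat
  have "Measurable.pred borel (\<lambda>x. back_steps x = a)" unfolding back_steps_def by measurable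
  then show "back_steps -` {a} \<inter> space borel \<in> sets borel" by (simp add: pred_def vimage_def Int_def)
qed simp

lemma g_omega_eq_wstar_lim:
  "g_omega \<eta> t g x = wstar_lim (omega_filter (tau_inv (back_steps x) \<eta>) t) g (real (back_steps x) + x)"
  by (simp add: g_omega_def back_steps_eq_0 Let_def back_steps_def)

lemma g_omega_AE_eq:
  assumes W: "\<And>K. is_wstar_lim (omega_filter (tau_inv K \<eta>) t) g (\<lambda>y. \<Psi> (y - real K))"
    and U: "ultrafilter_on \<eta>"
  shows "AE x in lebesgue. g_omega \<eta> t g x = \<Psi> x"
proof -
  have "AE x in lebesgue. 0 \<le> real K + x \<longrightarrow>
      wstar_lim (omega_filter (tau_inv K \<eta>) t) g (real K + x) = \<Psi> x" for K
    using AE_lebesgue_shift[OF wstar_lim_AE_eq[OF W[of K] omega_filter_tau_inv_neq_bot[OF U]], of "real K"]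
    by (simp add: add.commute)
  then have "AE x in lebesgue. \<forall>K. 0 \<le> real K + x \<longrightarrow>
      wstar_lim (omega_filter (tau_inv K \<eta>) t) g (real K + x) = \<Psi> x"
    by (subst AE_all_countable) auto
  then show ?thesis
    by eventually_elim (use back_steps_add_nonneg in \<open>auto simp: g_omega_eq_wstar_lim\<close>)
qed

definition borel_wstar_lim :: "real filter \<Rightarrow> (real \<Rightarrow> real) \<Rightarrow> real \<Rightarrow> real \<Rightarrow> real" where
  "borel_wstar_lim F f C = (SOME G. G \<in> borel_measurable borel \<and> (\<forall>x. \<bar>G x\<bar> \<le> C) \<and> is_wstar_lim F f G)"

lemma borel_wstar_lim:
  fixes f :: "real \<Rightarrow> real"
  assumes "f \<in> borel_measurable borel" "\<And>x. \<bar>f x\<bar> \<le> C" "ultrafilter_on F"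
  shows "borel_wstar_lim F f C \<in> borel_measurable borel" "\<And>x. \<bar>borel_wstar_lim F f C x\<bar> \<le> C"
    "is_wstar_lim F f (borel_wstar_lim F f C)"
  using someI_ex[OF is_wstar_lim_exists[OF assms]] by (simp_all add: borel_wstar_lim_def)

text \<open>The limits along \<open>\<tau>\<^sup>-\<^sup>K \<omega>\<close> glued together as in the definition of \<open>g\<^sub>\<omega>\<close>.\<close>
definition g_omega_borel :: "nat filter \<Rightarrow> real \<Rightarrow> (real \<Rightarrow> real) \<Rightarrow> real \<Rightarrow> real \<Rightarrow> real" where
  "g_omega_borel \<eta> t f C x =
     borel_wstar_lim (omega_filter (tau_inv (back_steps x) \<eta>) t) f C (real (back_steps x) + x)"

context
  fixes \<eta> :: "nat filter" and t :: real and f :: "real \<Rightarrow> real" and C :: real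
  assumes U: "ultrafilter_on \<eta>" and cofinite: "\<eta> \<le> cofinite"
    and f [measurable]: "f \<in> borel_measurable borel" and f_le: "\<And>x. \<bar>f x\<bar> \<le> C"
begin

lemma borel_wstar_lim_tau_inv:
  shows "borel_wstar_lim (omega_filter (tau_inv K \<eta>) t) f C \<in> borel_measurable borel"
    "\<And>x. \<bar>borel_wstar_lim (omega_filter (tau_inv K \<eta>) t) f C x\<bar> \<le> C"
    "is_wstar_lim (omega_filter (tau_inv K \<eta>) t) f (borel_wstar_lim (omega_filter (tau_inv K \<eta>) t) f C)"
  using borel_wstar_lim[OF f f_le ultrafilter_on_omega_filter[OF ultrafilter_on_tau_inv[OF U]]] by blast+

lemma borel_measurable_g_omega_borel [measurable]: "g_omega_borel \<eta> t f C \<in> borel_measurable borel"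
proof -
  have "(\<lambda>x. (\<lambda>K x. borel_wstar_lim (omega_filter (tau_inv K \<eta>) t) f C (real K + x)) (back_steps x) x)
      \<in> borel_measurable borel"
  proof (rule measurable_compose_countable'[OF _ measurable_back_steps])
    fix K :: nat
    note [measurable] = borel_wstar_lim_tau_inv(1)[of K]
    show "(\<lambda>x. borel_wstar_lim (omega_filter (tau_inv K \<eta>) t) f C (real K + x)) \<in> borel_measurable borel"
      by measurable
  qed simp
  then show ?thesis unfolding g_omega_borel_def[abs_def] by simp
qed

lemma abs_g_omega_borel_le: "\<bar>g_omega_borel \<eta> t f C x\<bar> \<le> C"
  unfolding g_omega_borel_def by (rule borel_wstar_lim_tau_inv)

lemma borel_wstar_lim_tau_inv_add:
  "AE z in lebesgue. 0 \<le> z \<longrightarrow> borel_wstar_lim (omega_filter (tau_inv K \<eta>) t) f C z =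
     borel_wstar_lim (omega_filter (tau_inv (K + D) \<eta>) t) f C (z + real D)"
proof -
  have "is_wstar_lim (filtermap (\<lambda>s. s + real D) (omega_filter (tau_inv (K + D) \<eta>) t)) f
      (\<lambda>z. borel_wstar_lim (omega_filter (tau_inv (K + D) \<eta>) t) f C (z + real D))"
    by (rule is_wstar_lim_shift) (simp_all add: borel_wstar_lim_tau_inv)
  then have "is_wstar_lim (omega_filter (tau_inv K \<eta>) t) f
      (\<lambda>z. borel_wstar_lim (omega_filter (tau_inv (K + D) \<eta>) t) f C (z + real D))"
    by (simp add: omega_filter_tau_inv_add[OF cofinite, symmetric])
  then show ?thesis
    by (rule is_wstar_lim_unique[OF omega_filter_tau_inv_neq_bot[OF U] borel_wstar_lim_tau_inv(3)])
qed

lemma borel_wstar_lim_tau_inv_eq_g_omega_borel: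
  "AE y in lebesgue. 0 \<le> y \<longrightarrow>
     borel_wstar_lim (omega_filter (tau_inv M \<eta>) t) f C y = g_omega_borel \<eta> t f C (y - real M)"
proof -
  have "AE y in lebesgue. \<forall>K. K \<le> M \<longrightarrow> real M - real K \<le> y \<longrightarrow>
      borel_wstar_lim (omega_filter (tau_inv K \<eta>) t) f C (y - (real M - real K)) =
      borel_wstar_lim (omega_filter (tau_inv M \<eta>) t) f C y"
  proof (subst AE_all_countable, intro allI)
    fix K
    show "AE y in lebesgue. K \<le> M \<longrightarrow> real M - real K \<le> y \<longrightarrow>
        borel_wstar_lim (omega_filter (tau_inv K \<eta>) t) f C (y - (real M - real K)) =
        borel_wstar_lim (omega_filter (tau_inv M \<eta>) t) f C y"
    proof (cases "K \<le> M")
      case True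
      from AE_lebesgue_shift[OF borel_wstar_lim_tau_inv_add[of K "M - K"], of "- real (M - K)"] True
      show ?thesis by eventually_elim (simp add: of_nat_diff algebra_simps)
    qed simp
  qed
  then show ?thesis
  proof eventually_elim
    case (elim y)
    show ?case
    proof
      assume "0 \<le> y"
      then have "back_steps (y - real M) \<le> M" by (intro back_steps_le) simp
      with elim back_steps_add_nonneg[of "y - real M"] show
        "borel_wstar_lim (omega_filter (tau_inv M \<eta>) t) f C y = g_omega_borel \<eta> t f C (y - real M)"
        by (auto simp: g_omega_borel_def algebra_simps)
    qed
  qed
qed

lemma is_wstar_lim_g_omega_borel:
  "is_wstar_lim (omega_filter (tau_inv M \<eta>) t) f (\<lambda>y. g_omega_borel \<eta> t f C (y - real M))"
proof (rule is_wstar_lim_cong_lim[OF borel_wstar_lim_tau_inv(3)])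
  show "Linf_pos (\<lambda>y. g_omega_borel \<eta> t f C (y - real M))"
    by (rule Linf_posI[where C = C]) (auto simp: abs_g_omega_borel_le)
qed (rule borel_wstar_lim_tau_inv_eq_g_omega_borel)

lemma g_omega_AE_eq_g_omega_borel: "AE x in lebesgue. g_omega \<eta> t f x = g_omega_borel \<eta> t f C x"
  by (rule g_omega_AE_eq[OF is_wstar_lim_g_omega_borel U])

section \<open>Weak-star limits commute with convolution\<close>

lemma tendsto_translate_integral_bounded_below:
  assumes [measurable]: "\<psi> \<in> borel_measurable borel" and \<psi>: "integrable lborel \<psi>"
    and \<psi>_supp: "\<And>w. w < - real D \<Longrightarrow> \<psi> w = 0"
  shows "((\<lambda>s. \<integral>w. f (w + s) * \<psi> w \<partial>lborel) \<longlongrightarrow> (\<integral>w. g_omega_borel \<eta> t f C (w - real N) * \<psi> w \<partial>lborel))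
    (omega_filter (tau_inv N \<eta>) t)"
proof -
  define \<phi> where "\<phi> z = \<psi> (z - real D)" for z
  have [measurable]: "\<phi> \<in> borel_measurable borel" unfolding \<phi>_def by measurable
  have "integrable lborel \<phi>"
    using lborel_integrable_real_affine[OF \<psi>, of 1 "- real D"] unfolding \<phi>_def by (simp add: algebra_simps)
  moreover have "\<forall>z<0. \<phi> z = 0" unfolding \<phi>_def using \<psi>_supp by simp
  ultimately have lim: "((\<lambda>s. \<integral>z. f (z + s) * \<phi> z \<partial>lborel) \<longlongrightarrow>
      (\<integral>z. g_omega_borel \<eta> t f C (z - real (N + D)) * \<phi> z \<partial>lborel)) (omega_filter (tau_inv (N + D) \<eta>) t)"
    using is_wstar_lim_g_omega_borel[of "N + D"] by (simp add: is_wstar_lim_borel_iff)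
  have shift: "(\<integral>z. h z * \<phi> z \<partial>lborel) = (\<integral>w. h (w + real D) * \<psi> w \<partial>lborel)" for h :: "real \<Rightarrow> real"
    using lborel_integral_real_affine[of 1 "\<lambda>z. h z * \<phi> z" "real D"] unfolding \<phi>_def by (simp add: add.commute)
  from lim[unfolded shift] have "((\<lambda>s. \<integral>w. f (w + (s + real D)) * \<psi> w \<partial>lborel) \<longlongrightarrow>
      (\<integral>w. g_omega_borel \<eta> t f C (w - real N) * \<psi> w \<partial>lborel)) (omega_filter (tau_inv (N + D) \<eta>) t)"
    by (simp add: ac_simps)
  then show ?thesis by (simp add: omega_filter_tau_inv_add[OF cofinite, of N t D] filterlim_filtermap)
qed

lemma tendsto_translate_integral_g_omega_borel:
  assumes [measurable]: "\<psi> \<in> borel_measurable borel" and \<psi>: "integrable lborel \<psi>"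
  shows "((\<lambda>s. \<integral>w. f (w + s) * \<psi> w \<partial>lborel) \<longlongrightarrow> (\<integral>w. g_omega_borel \<eta> t f C (w - real N) * \<psi> w \<partial>lborel))
    (omega_filter (tau_inv N \<eta>) t)"
proof -
  define \<psi>s where "\<psi>s D w = indicator {- real D..} w * \<psi> w" for D :: nat and w
  have [measurable]: "\<psi>s D \<in> borel_measurable borel" for D unfolding \<psi>s_def by measurable
  have \<psi>s_int: "integrable lborel (\<psi>s D)" for D
    unfolding \<psi>s_def by (rule integrable_bounded_mult[OF \<psi>]) (auto simp: indicator_def)
  have "(\<lambda>D. \<integral>w. \<bar>\<psi> w - \<psi>s D w\<bar> \<partial>lborel) \<longlonglongrightarrow> (\<integral>w. 0 \<partial>(lborel :: real measure))"
  proof (rule integral_dominated_convergence[where w = "\<lambda>w. \<bar>\<psi> w\<bar>"])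
    show "AE w in lborel. (\<lambda>D. \<bar>\<psi> w - \<psi>s D w\<bar>) \<longlonglongrightarrow> 0"
    proof (rule AE_I2)
      fix w :: real
      obtain M :: nat where M: "- w \<le> real M" using real_arch_simple by blast
      have "\<forall>\<^sub>F D in sequentially. \<bar>\<psi> w - \<psi>s D w\<bar> = 0"
        using eventually_ge_at_top[of M] by eventually_elim (use M in \<open>auto simp: \<psi>s_def indicator_def\<close>)
      then show "(\<lambda>D. \<bar>\<psi> w - \<psi>s D w\<bar>) \<longlonglongrightarrow> 0" by (rule tendsto_eventually)
    qed
  qed (use \<psi> in \<open>auto simp: \<psi>s_def indicator_def\<close>)
  then have L1: "(\<lambda>D. \<integral>w. \<bar>\<psi> w - \<psi>s D w\<bar> \<partial>lborel) \<longlonglongrightarrow> 0" by simp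
  show ?thesis
  proof (rule tendsto_integral_mult_L1_approx[where f = "\<lambda>s w. f (w + s)" and C = C, OF \<psi> \<psi>s_int L1])
    show "((\<lambda>s. \<integral>w. f (w + s) * \<psi>s D w \<partial>lborel) \<longlongrightarrow>
        (\<integral>w. g_omega_borel \<eta> t f C (w - real N) * \<psi>s D w \<partial>lborel)) (omega_filter (tau_inv N \<eta>) t)" for D
      by (rule tendsto_translate_integral_bounded_below[of _ D]) (simp_all add: \<psi>s_def \<psi>s_int[of D, unfolded \<psi>s_def])
  qed (simp_all add: f_le abs_g_omega_borel_le)
qed

context
  fixes k :: "real \<Rightarrow> real"
  assumes k [measurable]: "k \<in> borel_measurable borel" and k_int: "integrable lborel k"
begin

lemma is_wstar_lim_conv:
  "is_wstar_lim (omega_filter (tau_inv N \<eta>) t) (conv f k) (\<lambda>y. conv (g_omega_borel \<eta> t f C) k (y - real N))"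
proof -
  have mG: "(\<lambda>y. conv (g_omega_borel \<eta> t f C) k (y - real N)) \<in> borel_measurable borel" by measurable
  have "\<bar>conv (g_omega_borel \<eta> t f C) k x\<bar> \<le> C * (\<integral>u. \<bar>k u\<bar> \<partial>lborel)" for x
    by (rule abs_conv_le[OF _ k k_int abs_g_omega_borel_le]) simp
  with mG have "Linf_pos (\<lambda>y. conv (g_omega_borel \<eta> t f C) k (y - real N))"
    by (intro Linf_posI[where C = "C * (\<integral>u. \<bar>k u\<bar> \<partial>lborel)"]) simp_all
  moreover have "((\<lambda>s. \<integral>y. conv f k (y + s) * \<phi> y \<partial>lborel) \<longlongrightarrow>
      (\<integral>y. conv (g_omega_borel \<eta> t f C) k (y - real N) * \<phi> y \<partial>lborel)) (omega_filter (tau_inv N \<eta>) t)"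
    if [measurable]: "\<phi> \<in> borel_measurable borel" and \<phi>: "integrable lborel \<phi>" for \<phi>
  proof -
    have "(\<integral>y. conv f k (y + s) * \<phi> y \<partial>lborel) = (\<integral>w. f (w + s) * correlation k \<phi> w \<partial>lborel)" for s
      using integral_conv_mult_eq_correlation[OF k k_int that, of "\<lambda>z. f (z + s)" C, unfolded conv_translate]
      by (simp add: f_le)
    moreover have "(\<integral>y. conv (g_omega_borel \<eta> t f C) k (y - real N) * \<phi> y \<partial>lborel) =
        (\<integral>w. g_omega_borel \<eta> t f C (w - real N) * correlation k \<phi> w \<partial>lborel)"
      using integral_conv_mult_eq_correlation[OF k k_int that,
          of "\<lambda>z. g_omega_borel \<eta> t f C (z + - real N)" C, unfolded conv_translate]
      by (simp add: abs_g_omega_borel_le)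
    ultimately show ?thesis
      using tendsto_translate_integral_g_omega_borel[OF borel_measurable_correlation integrable_correlation,
          OF k k_int that k k_int that]
      by simp
  qed
  ultimately show ?thesis unfolding is_wstar_lim_borel_iff[OF borel_measurable_conv[OF f k] mG] by blast
qed

lemma g_omega_conv: "AE x in lebesgue. g_omega \<eta> t (conv f k) x = conv (g_omega \<eta> t f) k x"
proof -
  have "conv (g_omega \<eta> t f) k x = conv (g_omega_borel \<eta> t f C) k x" for x
  proof -
    have ae: "AE u in lebesgue. g_omega_borel \<eta> t f C (x - u) * k u = g_omega \<eta> t f (x - u) * k u"
      using AE_lebesgue_reflect[OF g_omega_AE_eq_g_omega_borel, of x] by eventually_elim simp
    have m: "(\<lambda>u. g_omega_borel \<eta> t f C (x - u) * k u) \<in> borel_measurable lebesgue"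
      by (rule borel_measurable_lebesgueI) measurable
    have "(\<lambda>u. g_omega \<eta> t f (x - u) * k u) \<in> borel_measurable lebesgue"
      by (rule borel_measurable_AE[OF m ae])
    then have "(\<integral>u. g_omega \<eta> t f (x - u) * k u \<partial>lebesgue) = (\<integral>u. g_omega_borel \<eta> t f C (x - u) * k u \<partial>lebesgue)"
      by (rule integral_cong_AE[OF _ m]) (use ae in \<open>auto elim: eventually_mono\<close>)
    then show ?thesis by (simp add: conv_def)
  qed
  note eq = this
  from g_omega_AE_eq[OF is_wstar_lim_conv U] show ?thesis by eventually_elim (simp only: eq)
qed

end

end

section \<open>The operator \<open>S\<close> as convolution with Erlang densities\<close>

lemma conv_erlang_density:
  "conv (erlang_density k1 1) (erlang_density k2 1) = erlang_density (Suc (k1 + k2)) 1"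
proof
  fix x
  have "conv (erlang_density k1 1) (erlang_density k2 1) x =
      enn2real (\<integral>\<^sup>+y. ennreal (erlang_density k1 1 (x - y) * erlang_density k2 1 y) \<partial>lborel)"
    by (simp add: conv_lborel integral_eq_nn_integral)
  also have "(\<integral>\<^sup>+y. ennreal (erlang_density k1 1 (x - y) * erlang_density k2 1 y) \<partial>lborel) =
      ennreal (erlang_density (Suc k1 + Suc k2 - 1) 1 x)"
    using fun_cong[OF convolution_erlang_density[of 1 k1 k2], of x] by (simp add: ennreal_mult)
  finally show "conv (erlang_density k1 1) (erlang_density k2 1) x = erlang_density (Suc (k1 + k2)) 1 x"
    by simp
qed

lemma h_fun_eq_erlang_density: "h_fun = erlang_density 0 1"
  by (auto simp: fun_eq_iff h_fun_def erlang_density_def)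

lemma h_pow_Suc_eq_erlang_density: "h_pow (Suc m) = erlang_density m 1"
proof (induction m)
  case (Suc m)
  have "h_pow (Suc (Suc m)) = conv (erlang_density 0 1) (erlang_density m 1)"
    by (simp only: h_pow.simps h_fun_eq_erlang_density Suc.IH)
  also have "\<dots> = erlang_density (Suc m) 1"
    by (simp only: conv_erlang_density add_0)
  finally show ?case .
qed (simp add: h_fun_eq_erlang_density)

lemma integrable_erlang_density: "integrable lborel (erlang_density m 1)"
proof (rule integrableI_nonneg)
  have "emeasure (density lborel (erlang_density m 1)) UNIV = 1"
    using prob_space.emeasure_space_1[OF prob_space_erlang_density[of 1 m]] by simp
  then show "(\<integral>\<^sup>+x. ennreal (erlang_density m 1 x) \<partial>lborel) < \<infinity>"
    by (simp add: emeasure_density)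
qed simp_all

lemma conv_reflect:
  fixes g k :: "real \<Rightarrow> real"
  assumes [measurable]: "g \<in> borel_measurable borel" "k \<in> borel_measurable borel"
  shows "conv g k x = (\<integral>y. g y * k (x - y) \<partial>lborel)"
  using lborel_integral_real_affine[of "-1" "\<lambda>u. g (x - u) * k u" x] by (simp add: conv_lborel)

lemma S_op_eq_conv:
  fixes g :: "real \<Rightarrow> real"
  assumes [measurable]: "g \<in> borel_measurable borel" and g_neg: "\<And>u. u < 0 \<Longrightarrow> g u = 0"
  shows "S_op g = conv g (erlang_density 0 1)"
proof
  fix x
  have "S_op g x = exp (- x) * (\<integral>y. indicator {0..x} y * (g y * exp y) \<partial>lborel)"
    by (simp add: S_op_def set_lebesgue_integral_def integral_lebesgue_eq_lborel)
  also have "\<dots> = (\<integral>y. g y * erlang_density 0 1 (x - y) \<partial>lborel)"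
    by (subst integral_mult_right_zero[symmetric], rule Bochner_Integration.integral_cong)
      (auto simp: indicator_def erlang_density_def mult_exp_exp g_neg)
  finally show "S_op g x = conv g (erlang_density 0 1) x" by (simp add: conv_reflect)
qed

lemma S_op_funpow_eq_conv:
  fixes f :: "real \<Rightarrow> real"
  assumes [measurable]: "f \<in> borel_measurable borel" and f_le: "\<And>x. \<bar>f x\<bar> \<le> C"
    and f_neg: "\<And>u. u < 0 \<Longrightarrow> f u = 0"
  shows "(S_op ^^ Suc m) f = conv f (erlang_density m 1)"
proof (induction m)
  case 0
  show ?case by (simp add: S_op_eq_conv f_neg)
next
  case (Suc m)
  show ?case
  proof
    fix x :: real
    \<comment> \<open>By Fubini, the outer convolution with \<open>h\<close> moves onto the kernel: \<open>h\<^sup>m * h = h\<^sup>m\<^sup>+\<^sup>1\<close>.\<close>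
    define \<phi> where "\<phi> y = erlang_density 0 1 (x - y)" for y
    have [measurable]: "\<phi> \<in> borel_measurable borel" unfolding \<phi>_def by measurable
    have \<phi>: "integrable lborel \<phi>"
      using lborel_integrable_real_affine[OF integrable_erlang_density[of 0], of "-1" x] unfolding \<phi>_def by simp
    have "correlation (erlang_density m 1) \<phi> w = erlang_density (Suc m) 1 (x - w)" for w
      using fun_cong[OF conv_erlang_density[of 0 m], of "x - w"]
      by (simp add: correlation_def \<phi>_def conv_lborel algebra_simps)
    moreover have "conv f (erlang_density m 1) u = 0" if "u < 0" for u
      by (rule conv_eq_0_if_supports_nonneg) (simp_all add: f_neg erlang_density_def that)
    ultimately have "S_op (conv f (erlang_density m 1)) x = (\<integral>w. f w * erlang_density (Suc m) 1 (x - w) \<partial>lborel)"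
      using integral_conv_mult_eq_correlation[OF _ integrable_erlang_density _ \<phi>, where B = f and K = C]
      by (simp add: S_op_eq_conv conv_reflect \<phi>_def f_le)
    moreover have "(S_op ^^ Suc (Suc m)) f x = S_op ((S_op ^^ Suc m) f) x" by simp
    ultimately show "(S_op ^^ Suc (Suc m)) f x = conv f (erlang_density (Suc m) 1) x"
      by (simp only: Suc.IH) (simp add: conv_reflect)
  qed
qed

section \<open>Reduction to bounded Borel functions vanishing on the negative axis\<close>

lemma Linf_pos_borel_representative:
  assumes "Linf_pos f"
  obtains f' C where "f' \<in> borel_measurable borel" "\<And>x. \<bar>f' x\<bar> \<le> C" "\<And>x. x < 0 \<Longrightarrow> f' x = 0"
    "AE x in lebesgue. x \<ge> 0 \<longrightarrow> f x = f' x"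
proof -
  from assms obtain C where m: "(\<lambda>x. indicator {0..} x *\<^sub>R f x) \<in> borel_measurable lebesgue"
    and b: "AE x in lebesgue. x \<in> {0..} \<longrightarrow> \<bar>f x\<bar> \<le> C"
    unfolding Linf_pos_def set_borel_measurable_def by auto
  from completion_ex_borel_measurable_real[OF m]
  obtain f1 where f1: "f1 \<in> borel_measurable lborel" "AE x in lborel. indicator {0..} x *\<^sub>R f x = f1 x"
    by blast
  define f' where "f' x = indicator {0..} x * max (- \<bar>C\<bar>) (min \<bar>C\<bar> (f1 x))" for x
  show ?thesis
  proof (rule that)
    show "f' \<in> borel_measurable borel" unfolding f'_def using f1(1) by simp
    show "\<bar>f' x\<bar> \<le> \<bar>C\<bar>" for x unfolding f'_def by (auto simp: indicator_def)
    show "f' x = 0" if "x < 0" for x using that by (simp add: f'_def)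
    from b AE_completion[OF f1(2)] show "AE x in lebesgue. x \<ge> 0 \<longrightarrow> f x = f' x"
      by eventually_elim (auto simp: f'_def indicator_def)
  qed
qed

lemma S_op_cong_AE:
  fixes f f' :: "real \<Rightarrow> real"
  assumes "AE x in lebesgue. x \<ge> 0 \<longrightarrow> f x = f' x" and [measurable]: "f' \<in> borel_measurable borel"
  shows "S_op f = S_op f'"
proof
  fix x
  have "(LINT y:{0..x}|lebesgue. f y * exp y) = (LINT y:{0..x}|lebesgue. f' y * exp y)"
    by (rule set_integral_lebesgue_cong_AE)
      (use assms(1) in \<open>auto simp: set_borel_measurable_def intro!: borel_measurable_lebesgueI elim: eventually_mono\<close>)
  then show "S_op f x = S_op f' x" by (simp add: S_op_def)
qed

lemma g_omega_cong_AE: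
  fixes f f' :: "real \<Rightarrow> real"
  assumes "AE x in lebesgue. x \<ge> 0 \<longrightarrow> f x = f' x" and "f' \<in> borel_measurable borel"
    and "\<eta> \<le> cofinite" and "t \<ge> 0"
  shows "g_omega \<eta> t f = g_omega \<eta> t f'"
  using is_wstar_lim_cong_fun[OF assms(1,2) eventually_omega_filter_ge[OF assms(3,4)]]
  by (simp add: fun_eq_iff g_omega_eq_wstar_lim wstar_lim_def)

theorem theorem5p3:
  fixes f :: "real \<Rightarrow> real" and \<eta> :: "nat filter" and t :: real and n :: nat
  assumes "Linf_pos f"
    and "ultrafilter_on \<eta>" and "\<eta> \<le> cofinite"
    and "t \<in> {0..1}"
    and "n \<ge> 1"
  shows "AE x in lebesgue.
           g_omega \<eta> t ((S_op ^^ n) f) x = conv (g_omega \<eta> t f) (h_pow n) x \<and>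
           conv (g_omega \<eta> t f) (h_pow n) x =
             (LINT s:{0..}|lebesgue. g_omega \<eta> t f (x - s) * exp (- s) * s ^ (n - 1) / fact (n - 1))"
proof -
  obtain f' C where f' [measurable]: "f' \<in> borel_measurable borel" and f'_le: "\<And>x. \<bar>f' x\<bar> \<le> C"
    and f'_neg: "\<And>x. x < 0 \<Longrightarrow> f' x = 0" and ae: "AE x in lebesgue. x \<ge> 0 \<longrightarrow> f x = f' x"
    using Linf_pos_borel_representative[OF assms(1)] by blast
  obtain m where n: "n = Suc m" using assms(5) by (cases n) auto
  have h_pow: "h_pow n = erlang_density m 1" by (simp add: n h_pow_Suc_eq_erlang_density)
  have "(S_op ^^ n) f = (S_op ^^ n) f'"
    by (simp only: n funpow_Suc_right comp_def S_op_cong_AE[OF ae f'])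
  also have "\<dots> = conv f' (h_pow n)"
    using S_op_funpow_eq_conv[OF f' f'_le f'_neg, of m] by (simp add: n h_pow_Suc_eq_erlang_density)
  finally have Sn: "(S_op ^^ n) f = conv f' (h_pow n)" .
  have g_omega_f: "g_omega \<eta> t f = g_omega \<eta> t f'"
    using assms(3,4) by (intro g_omega_cong_AE[OF ae]) simp_all
  have conv_formula: "conv g (h_pow n) x =
      (LINT s:{0..}|lebesgue. g (x - s) * exp (- s) * s ^ (n - 1) / fact (n - 1))" for g :: "real \<Rightarrow> real" and x
    unfolding conv_def set_lebesgue_integral_def h_pow unfolding n
    by (rule Bochner_Integration.integral_cong) (auto simp: erlang_density_def indicator_def)
  have "AE x in lebesgue. g_omega \<eta> t (conv f' (h_pow n)) x = conv (g_omega \<eta> t f') (h_pow n) x"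
    unfolding h_pow
    by (rule g_omega_conv[OF assms(2,3) f' f'_le borel_measurable_erlang_density integrable_erlang_density])
  then show ?thesis by eventually_elim (simp add: Sn g_omega_f conv_formula)
qed

end
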